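(* Let $K$ be a non-polar compact subset of $\mathbb C$, let $d\ge0$, and let $P(z)=a_dz^d+\dots+a_1z+a_0$ be a polynomial with complex coefficients, where $a_d$ may be zero. Then for every $k=0,\dots,d$, $$|a_k|\ \le\ \frac{\binom dk\,M(P)\,(\max_{z\in K}|z|)^{d-k}}{\mathrm{Cap}(K)^d}.$$
   Context: $\mu_K$ is the equilibrium measure of $K$ and $\mathrm{Cap}$ is logarithmic capacity. The Mahler measure of $P$ relative to $K$ is $M(P)=\exp[\int\log|P|\,d\mu_K]$, with $M(0)=0$. *)

theory Defs
  imports "HOL-Probability.Probability" "HOL-Computational_Algebra.Polynomial"
begin

definition prob_on :: "complex set \<Rightarrow> complex measure \<Rightarrow> bool" where
  "prob_on K \<mu> \<longleftrightarrow> sets \<mu> = sets borel \<and> prob_space \<mu> \<and> emeasure \<mu> (UNIV - K) = 0"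

text \<open>Logarithmic energy  I(mu) = double integral of log(1/|z-w|), with value +infinity
  if the diagonal carries positive mass or the kernel is not integrable
  (on a compact set the kernel is bounded below, so non-integrability means +infinity).\<close>
definition log_energy :: "complex measure \<Rightarrow> ereal" where
  "log_energy \<mu> =
     (if (AE p in \<mu> \<Otimes>\<^sub>M \<mu>. fst p \<noteq> snd p) \<and>
         integrable (\<mu> \<Otimes>\<^sub>M \<mu>) (\<lambda>p. - ln (cmod (fst p - snd p)))
      then ereal (\<integral>p. - ln (cmod (fst p - snd p)) \<partial>(\<mu> \<Otimes>\<^sub>M \<mu>))
      else \<infinity>)"

definition robin_const :: "complex set \<Rightarrow> ereal" where
  "robin_const K = Inf {log_energy \<mu> | \<mu>. prob_on K \<mu>}"

definition log_cap :: "complex set \<Rightarrow> real" where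
  "log_cap K = (if robin_const K = \<infinity> then 0 else exp (- real_of_ereal (robin_const K)))"

definition polar :: "complex set \<Rightarrow> bool" where
  "polar K \<longleftrightarrow> log_cap K = 0"

definition equilibrium_measure :: "complex set \<Rightarrow> complex measure \<Rightarrow> bool" where
  "equilibrium_measure K \<mu> \<longleftrightarrow> prob_on K \<mu> \<and> log_energy \<mu> = robin_const K"

text \<open>Mahler measure relative to mu: exp(integral log|P| dmu), M(0) = 0, and value 0
  when the integral is -infinity (log|P| is bounded above on compact K).\<close>
definition mahler :: "complex measure \<Rightarrow> complex poly \<Rightarrow> real" where
  "mahler \<mu> P =
     (if P = 0 then 0
      else if integrable \<mu> (\<lambda>z. ln (cmod (poly P z)))
      then exp (\<integral>z. ln (cmod (poly P z)) \<partial>\<mu>)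
      else 0)"

end

theory Submission
  imports Defs "HOL-Complex_Analysis.Complex_Analysis" "HOL-Computational_Algebra.Fundamental_Theorem_Algebra"
begin

text \<open>Write \<open>V\<close> for the Robin constant, so that \<open>Cap K = exp (-V)\<close>, \<open>U\<close> for the logarithmic
  potential of the equilibrium measure \<open>\<mu>\<close> and \<open>R = max |K|\<close>. Minimality of the energy gives
  \<open>U = V\<close> \<open>\<mu>\<close>-almost everywhere, and the maximum principle upgrades this to Frostman's bound
  \<open>U \<le> V\<close> everywhere. Averaging \<open>U\<close> over large circles shows \<open>Cap K \<le> R\<close>, and the maximum
  principle for \<open>U + ln |z|\<close> outside the disc of radius \<open>R\<close> shows \<open>U a \<le> V + ln (R / |a|)\<close>
  for \<open>|a| > R\<close>. Hence \<open>\<integral> ln |z - a| d\<mu> \<ge> ln (Cap K * max R |a| / R)\<close> for every \<open>a\<close>, and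
  for \<open>P = a\<^sub>d \<Prod> (z - \<alpha>)\<close> this yields \<open>M(P) \<ge> |a\<^sub>d| (Cap K / R)\<^sup>d \<Prod> max R |\<alpha>|\<close>. The
  elementary bound \<open>|a\<^sub>k| R\<^sup>k \<le> binom d k |a\<^sub>d| \<Prod> max R |\<alpha>|\<close> for the coefficients of the
  product finishes the proof.\<close>

section \<open>Mean values over circles\<close>

lemma continuous_le_average_imp_eq:
  fixes g :: "real \<Rightarrow> real"
  assumes cont: "continuous_on {a..b} g" and le: "\<And>t. t \<in> {a..b} \<Longrightarrow> g t \<le> M"
    and avg: "integral {a..b} g = (b - a) * M" and "a < b" and t: "t \<in> {a..b}"
  shows "g t = M"
proof -
  have cont': "continuous_on {a..b} (\<lambda>t. M - g t)" by (intro continuous_intros cont)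
  have "integral {a..b} (\<lambda>t. M - g t) = integral {a..b} (\<lambda>t. M) - integral {a..b} g"
    using cont by (intro integral_diff integrable_continuous_interval continuous_intros)
  also have "\<dots> = 0" using avg \<open>a < b\<close> by simp
  finally show ?thesis using integral_eq_0_iff[OF cont' \<open>a < b\<close>] le t by fastforce
qed

lemma exists_cis_norm_add_gt:
  fixes w :: complex assumes "r > 0"
  obtains t where "t \<in> {0..2*pi}" "norm w < norm (w + of_real r * cis t)"
proof (cases "w = 0")
  case True thus ?thesis using that[of 0] \<open>r > 0\<close> by auto
next
  case False
  define a where "a = (if Arg w \<ge> 0 then Arg w else Arg w + 2*pi)"
  have "cis a = sgn w" using cis_Arg[OF False] by (auto simp: a_def cis.ctr)
  hence "w + of_real r * cis a = of_real (1 + r / norm w) * w"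
    by (simp add: sgn_div_norm distrib_right scaleR_conv_of_real divide_inverse)
  hence "norm (w + of_real r * cis a) = \<bar>1 + r / norm w\<bar> * norm w"
    by (simp only: norm_mult norm_of_real)
  also have "\<dots> = norm w + r" using False \<open>r > 0\<close> by (simp add: field_simps)
  finally have "norm (w + of_real r * cis a) = norm w + r" .
  moreover have "a \<in> {0..2*pi}" using Arg_bounded[of w] by (auto simp: a_def)
  ultimately show ?thesis using that[of a] \<open>r > 0\<close> by auto
qed

lemma compact_outermost_maximizer:
  fixes f :: "'a::real_normed_vector \<Rightarrow> real"
  assumes S: "compact S" and cont: "continuous_on S f" and "S \<noteq> {}"
  obtains z where "z \<in> S" "\<And>y. y \<in> S \<Longrightarrow> f y \<le> f z" "\<And>y. y \<in> S \<Longrightarrow> f y = f z \<Longrightarrow> norm y \<le> norm z"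
proof -
  obtain x0 where x0: "x0 \<in> S" "\<And>y. y \<in> S \<Longrightarrow> f y \<le> f x0"
    using continuous_attains_sup[OF S \<open>S \<noteq> {}\<close> cont] by blast
  define Mx where "Mx = {x \<in> S. f x = f x0}"
  have "closed Mx"
    using continuous_closed_preimage[OF cont compact_imp_closed[OF S], of "{f x0}"]
    by (auto simp: Mx_def vimage_def Int_def)
  hence Mx: "compact Mx" using compact_Int_closed[OF S, of Mx] by (simp add: Mx_def Int_absorb1)
  have "x0 \<in> Mx" using x0 by (simp add: Mx_def)
  then obtain z where z: "z \<in> Mx" "\<And>y. y \<in> Mx \<Longrightarrow> norm y \<le> norm z"
    using continuous_attains_sup[OF Mx _ continuous_on_norm[OF continuous_on_id]] by blast
  show ?thesis
  proof (rule that)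
    show "z \<in> S" using z(1) by (simp add: Mx_def)
    show "f y \<le> f z" if "y \<in> S" for y using x0(2)[OF that] z(1) by (simp add: Mx_def)
    show "norm y \<le> norm z" if "y \<in> S" "f y = f z" for y
      using z(1) that by (intro z(2)) (simp add: Mx_def)
  qed
qed

text \<open>Take an outermost maximiser: by the mean value property the whole circle around it is at
  the maximal level, but the circle contains a point of larger modulus.\<close>
lemma mean_value_maximum_principle:
  fixes f :: "complex \<Rightarrow> real"
  assumes F: "closed F" and cont: "continuous_on F f"
    and mean_value: "\<And>w. w \<in> F \<Longrightarrow> c < f w \<Longrightarrow> \<exists>r>0. (\<forall>t. w + of_real r * cis t \<in> F) \<and>
            f w = integral {0..2*pi} (\<lambda>t. f (w + of_real r * cis t)) / (2*pi)"
    and far: "\<And>w. w \<in> F \<Longrightarrow> B \<le> norm w \<Longrightarrow> f w \<le> c"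
    and w: "w \<in> F"
  shows "f w \<le> c"
proof (rule ccontr)
  assume "\<not> f w \<le> c"
  define S where "S = {x \<in> F. f w \<le> f x}"
  have "closed S" unfolding S_def
    using continuous_closed_preimage[OF cont F, of "{f w..}"] by (auto simp: vimage_def Int_def)
  moreover have "S \<subseteq> cball 0 B" using far \<open>\<not> f w \<le> c\<close> by (force simp: S_def)
  ultimately have S: "compact S" by (meson bounded_cball bounded_subset compact_eq_bounded_closed)
  have wS: "w \<in> S" using w by (simp add: S_def)
  have contS: "continuous_on S f" using cont by (rule continuous_on_subset) (auto simp: S_def)
  obtain z where z: "z \<in> S" "\<And>y. y \<in> S \<Longrightarrow> f y \<le> f z" "\<And>y. y \<in> S \<Longrightarrow> f y = f z \<Longrightarrow> norm y \<le> norm z"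
    using compact_outermost_maximizer[OF S contS] wS by blast
  have fle: "f y \<le> f z" if "y \<in> F" for y
    using z(2)[of y] z(2)[OF wS] that by (cases "f w \<le> f y") (auto simp: S_def)
  have "z \<in> F" "f w \<le> f z" using z(1) by (auto simp: S_def)
  hence "c < f z" using \<open>\<not> f w \<le> c\<close> by linarith
  then obtain r where r: "r > 0" "\<And>t. z + of_real r * cis t \<in> F"
    and avg: "f z = integral {0..2*pi} (\<lambda>t. f (z + of_real r * cis t)) / (2*pi)"
    using mean_value[OF \<open>z \<in> F\<close>] by blast
  obtain t0 where t0: "t0 \<in> {0..2*pi}" "norm z < norm (z + of_real r * cis t0)"
    using exists_cis_norm_add_gt[OF r(1)] by blast
  have "f (z + of_real r * cis t0) = f z"
  proof (rule continuous_le_average_imp_eq[OF _ _ _ _ t0(1)])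
    show "continuous_on {0..2*pi} (\<lambda>t. f (z + of_real r * cis t))"
      by (intro continuous_on_compose2[OF cont] continuous_intros) (auto simp: r)
  qed (use avg fle r(2) in auto)
  moreover have "z + of_real r * cis t0 \<in> S" using r(2) fle \<open>f w \<le> f z\<close> calculation by (simp add: S_def)
  ultimately have "norm (z + of_real r * cis t0) \<le> norm z" using z(3) by blast
  with t0(2) show False by linarith
qed

text \<open>The mean value of \<open>ln |1 + c e^{it}|\<close> is the real part of the value at \<open>0\<close> of the
  holomorphic function \<open>Ln (1 + c z)\<close>, by Cauchy's integral formula on the unit circle.\<close>
lemma has_integral_ln_norm_one_plus_cis:
  fixes c :: complex assumes c: "norm c < 1"
  shows "((\<lambda>t. ln (norm (1 + c * cis t))) has_integral 0) {0..2*pi}"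
proof -
  define \<rho> where "\<rho> = (if c = 0 then 2 else (1 + 1 / norm c) / 2)"
  have \<rho>1: "\<rho> > 1" using c by (auto simp: \<rho>_def field_simps)
  have \<rho>c: "\<rho> * norm c < 1"
    using c by (cases "c = 0") (auto simp: \<rho>_def field_simps)
  define f where "f z = Ln (1 + c * z)" for z
  have re: "Re (1 + c * z) > 0" if "z \<in> ball 0 \<rho>" for z
  proof -
    have "norm (c * z) \<le> norm c * \<rho>" using that by (simp add: norm_mult mult_left_mono less_imp_le)
    hence "norm (c * z) < 1" using \<rho>c by (simp add: mult.commute)
    hence "\<bar>Re (c * z)\<bar> < 1" using abs_Re_le_cmod le_less_trans by blast
    thus ?thesis by simp
  qed
  have "1 + c * z \<notin> \<real>\<^sub>\<le>\<^sub>0" if "z \<in> ball 0 \<rho>" for z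
    using re[OF that] by (auto simp: complex_nonpos_Reals_iff)
  hence "f holomorphic_on ball 0 \<rho>"
    unfolding f_def by (intro holomorphic_intros)
  hence "f holomorphic_on cball 0 1"
    by (rule holomorphic_on_subset) (use \<rho>1 in auto)
  from Cauchy_integral_circlepath_simple[OF this, of 0]
  have "((\<lambda>u. f u / (u - 0)) has_contour_integral 2 * of_real pi * \<i> * f 0) (part_circlepath 0 1 0 (2*pi))"
    by (simp add: circlepath_def)
  hence "((\<lambda>t. f (0 + of_real 1 * cis t) / (of_real 1 * cis t - 0) * of_real 1 * \<i> * cis t) has_integral 0) {0..2*pi}"
    using has_contour_integral_part_circlepath_iff[of 0 "2*pi" "\<lambda>u. f u / (u - 0)" 0 0 1] pi_gt_zero
    by (simp add: f_def)
  hence "((\<lambda>t. \<i> * f (cis t)) has_integral 0) {0..2*pi}"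
    by (rule has_integral_eq[rotated]) (simp add: field_simps cis_neq_zero)
  hence "((\<lambda>t. (- \<i>) * (\<i> * f (cis t))) has_integral (- \<i>) * 0) {0..2*pi}"
    by (rule has_integral_mult_right)
  hence "((\<lambda>t. f (cis t)) has_integral 0) {0..2*pi}" by simp
  from has_integral_linear[OF this bounded_linear_Re]
  have "((\<lambda>t. Re (f (cis t))) has_integral 0) {0..2*pi}" by (simp add: o_def)
  moreover have "Re (f (cis t)) = ln (norm (1 + c * cis t))" for t
  proof -
    have "cis t \<in> ball 0 \<rho>" using \<rho>1 by simp
    hence "Re (1 + c * cis t) > 0" by (rule re)
    hence "1 + c * cis t \<noteq> 0" by (metis less_irrefl zero_complex.sel(1))
    thus ?thesis by (simp add: f_def)
  qed
  ultimately show ?thesis by simp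
qed

lemma has_integral_ln_norm_add_cis:
  fixes a b :: complex assumes ab: "norm b < norm a"
  shows "((\<lambda>t. ln (norm (a + b * cis t))) has_integral (2*pi*ln (norm a))) {0..2*pi}"
proof -
  have a0: "a \<noteq> 0" using ab by auto
  have ba: "norm (b / a) < 1" using ab a0 by (simp add: norm_divide)
  have eq: "ln (norm (a + b * cis t)) = ln (norm a) + ln (norm (1 + b / a * cis t))" for t
  proof -
    have "norm (b / a * cis t) < 1" using ba by (simp add: norm_mult norm_divide)
    hence "1 + b / a * cis t \<noteq> 0"
      by (metis add.commute add_eq_0_iff norm_minus_cancel norm_one order_less_irrefl)
    moreover have "a + b * cis t = a * (1 + b / a * cis t)" using a0 by (simp add: field_simps)
    ultimately show ?thesis using a0 by (simp add: norm_mult ln_mult)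
  qed
  have "((\<lambda>t. ln (norm a)) has_integral (2*pi*ln (norm a))) {0..2*pi}"
    using has_integral_const_real[of "ln (norm a)" 0 "2*pi"] by simp
  from has_integral_add[OF this has_integral_ln_norm_one_plus_cis[OF ba]]
  show ?thesis by (simp add: eq)
qed

lemma norm_of_real_cis_diff:
  fixes y :: complex
  shows "cmod (of_real \<rho> * cis t - y) = cmod (of_real \<rho> + (- cnj y) * cis t)"
proof -
  have "of_real \<rho> * cis t - y = cis t * (of_real \<rho> - y * cis (- t))"
    by (simp add: algebra_simps cis_mult)
  hence "cmod (of_real \<rho> * cis t - y) = cmod (cnj (of_real \<rho> - y * cis (- t)))"
    by (simp only: norm_mult complex_mod_cnj) simp
  also have "cnj (of_real \<rho> - y * cis (- t)) = of_real \<rho> + (- cnj y) * cis t"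
    by (simp add: cis_cnj)
  finally show ?thesis .
qed

lemma borel_measurable_cis [measurable]: "cis \<in> borel_measurable borel"
  by (intro borel_measurable_continuous_onI continuous_intros)

lemma integrable_interval_times_bounded:
  fixes M :: "'a measure" and F :: "real \<Rightarrow> 'a \<Rightarrow> real"
  assumes "finite_measure M"
    and [measurable]: "(\<lambda>(t, y). F t y) \<in> borel_measurable (lborel \<Otimes>\<^sub>M M)"
    and bound: "AE y in M. \<forall>t. \<bar>F t y\<bar> \<le> B"
  shows "integrable (lborel \<Otimes>\<^sub>M M) (\<lambda>(t, y). indicator {a..b} t * F t y)"
proof -
  interpret M: finite_measure M by fact
  interpret Q: pair_sigma_finite lborel M
    by (intro pair_sigma_finite.intro sigma_finite_lborel M.sigma_finite_measure_axioms)
  define G where "G t y = indicator {a..b} t * F t y" for t y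
  have [measurable]: "(\<lambda>(t, y). G t y) \<in> borel_measurable (lborel \<Otimes>\<^sub>M M)" unfolding G_def by measurable
  define C where "C = \<bar>B\<bar>"
  have C: "0 \<le> C" by (simp add: C_def)
  have G_bound: "AE y in M. \<bar>G t y\<bar> \<le> C * indicator {a..b} t" for t
    using bound
  proof eventually_elim
    case (elim y)
    have "\<bar>F t y\<bar> \<le> C" using elim abs_ge_self[of B] unfolding C_def by (meson order_trans)
    thus ?case by (simp add: G_def indicator_def)
  qed
  have ind: "C * indicator {a..b} t \<le> C" for t using C by (cases "t \<in> {a..b}") auto
  have int_t: "integrable M (G t)" for t
    using G_bound[of t] ind[of t] by (intro M.integrable_const_bound[of _ C]) (auto elim!: eventually_mono)
  have "integrable lborel (\<lambda>t. \<integral>y. norm (G t y) \<partial>M)"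
  proof (rule Bochner_Integration.integrable_bound)
    show "integrable lborel (\<lambda>t. C * measure M (space M) * indicator {a..b} t :: real)"
      by (intro integrable_mult_right integrable_real_indicator) (auto simp: emeasure_lborel_Icc_eq)
    show "AE t in lborel. norm (\<integral>y. norm (G t y) \<partial>M) \<le> norm (C * measure M (space M) * indicator {a..b} t :: real)"
    proof (intro AE_I2)
      fix t
      have "(\<integral>y. norm (G t y) \<partial>M) \<le> (\<integral>y. C * indicator {a..b} t \<partial>M)"
        using G_bound[of t] int_t by (intro integral_mono_AE) auto
      thus "norm (\<integral>y. norm (G t y) \<partial>M) \<le> norm (C * measure M (space M) * indicator {a..b} t :: real)"
        using C by (simp add: abs_of_nonneg integral_nonneg_AE mult_ac)
    qed
  qed (rule M.borel_measurable_lebesgue_integral, measurable)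
  hence "integrable (lborel \<Otimes>\<^sub>M M) (\<lambda>(t, y). G t y)"
    by (intro Q.Fubini_integrable) (auto simp: int_t)
  thus ?thesis by (simp add: G_def)
qed

lemma integral_interval_swap:
  fixes M :: "'a measure" and F :: "real \<Rightarrow> 'a \<Rightarrow> real"
  assumes "finite_measure M"
    and [measurable]: "(\<lambda>(t, y). F t y) \<in> borel_measurable (lborel \<Otimes>\<^sub>M M)"
    and bound: "AE y in M. \<forall>t. \<bar>F t y\<bar> \<le> B"
    and [measurable]: "h \<in> borel_measurable M"
    and inner: "AE y in M. integral {a..b} (\<lambda>t. F t y) = h y"
  shows "integral {a..b} (\<lambda>t. \<integral>y. F t y \<partial>M) = integral\<^sup>L M h"
proof -
  interpret M: finite_measure M by fact
  interpret Q: pair_sigma_finite lborel M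
    by (intro pair_sigma_finite.intro sigma_finite_lborel M.sigma_finite_measure_axioms)
  define G where "G t y = indicator {a..b} t * F t y" for t y
  have [measurable]: "(\<lambda>(t, y). G t y) \<in> borel_measurable (lborel \<Otimes>\<^sub>M M)" unfolding G_def by measurable
  have int: "integrable (lborel \<Otimes>\<^sub>M M) (\<lambda>(t, y). G t y)"
    unfolding G_def by (rule integrable_interval_times_bounded[OF assms(1-3)])
  have "integral {a..b} (\<lambda>t. \<integral>y. F t y \<partial>M) = (\<integral>t. \<integral>y. G t y \<partial>M \<partial>lborel)"
  proof -
    have "integrable lborel (\<lambda>t. \<integral>y. G t y \<partial>M)" using Q.integrable_fst'[OF int] by simp
    hence "set_integrable lborel {a..b} (\<lambda>t. \<integral>y. F t y \<partial>M)"
      by (simp add: set_integrable_def G_def)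
    from set_borel_integral_eq_integral(2)[OF this] show ?thesis
      by (simp add: set_lebesgue_integral_def G_def)
  qed
  also have "\<dots> = (\<integral>y. \<integral>t. G t y \<partial>lborel \<partial>M)"
    using Q.integral_fst'[OF int] Q.integral_snd[OF int] by simp
  also have "\<dots> = integral\<^sup>L M h"
  proof (rule integral_cong_AE)
    show "AE y in M. (\<integral>t. G t y \<partial>lborel) = h y"
      using Q.AE_integrable_snd[OF int] inner
    proof eventually_elim
      case (elim y)
      hence "set_integrable lborel {a..b} (\<lambda>t. F t y)" by (simp add: set_integrable_def G_def)
      from set_borel_integral_eq_integral(2)[OF this] show ?case
        using elim(2) by (simp add: set_lebesgue_integral_def G_def)
    qed
  qed (rule lborel.borel_measurable_lebesgue_integral, measurable)
  finally show ?thesis .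
qed

lemma abs_ln_le_abs_ln_bounds:
  fixes a b x :: real assumes "0 < a" "a \<le> x" "x \<le> b"
  shows "\<bar>ln x\<bar> \<le> \<bar>ln a\<bar> + \<bar>ln b\<bar>"
  using ln_mono[of a x] ln_mono[of x b] assms by linarith

lemma abs_ln_diff_le:
  fixes a b d :: real assumes "0 < d" "d \<le> a" "d \<le> b"
  shows "\<bar>ln a - ln b\<bar> \<le> \<bar>a - b\<bar> / d"
proof -
  have "ln x - ln y \<le> \<bar>x - y\<bar> / d" if "d \<le> x" "d \<le> y" for x y
  proof -
    have "ln x - ln y \<le> (x - y) / y" using that assms by (intro ln_diff_le) auto
    also have "\<dots> \<le> \<bar>x - y\<bar> / y" using that assms by (intro divide_right_mono) auto
    also have "\<dots> \<le> \<bar>x - y\<bar> / d" using that assms by (intro divide_left_mono) auto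
    finally show ?thesis .
  qed
  from this[of a b] this[of b a] show ?thesis using assms by (simp add: abs_minus_commute)
qed

lemma ln_diff_le_of_near:
  fixes a b s :: real
  assumes a: "0 < a" and s: "0 < s" "s \<le> b" and ab: "a \<le> b + 2 * s"
  shows "ln a - ln b \<le> 2" and "4 * s \<le> \<rho> \<Longrightarrow> \<rho> \<le> a \<Longrightarrow> ln a - ln b \<le> 4 * s / \<rho>"
proof -
  have b: "0 < b" using s by simp
  have "ln a - ln b \<le> (a - b) / b" using a b by (rule ln_diff_le)
  also have "\<dots> \<le> 2 * s / b" using ab b by (intro divide_right_mono) auto
  finally have le: "ln a - ln b \<le> 2 * s / b" .
  also have "\<dots> \<le> 2 * s / s" using s by (intro divide_left_mono) auto
  finally show "ln a - ln b \<le> 2" using s by simp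
  assume "4 * s \<le> \<rho>" "\<rho> \<le> a"
  hence "\<rho> / 2 \<le> b" using ab by simp
  hence "2 * s / b \<le> 2 * s / (\<rho> / 2)" using s \<open>4 * s \<le> \<rho>\<close> by (intro divide_left_mono) auto
  thus "ln a - ln b \<le> 4 * s / \<rho>" using le by simp
qed

lemma first_order_coeff_nonneg:
  fixes a c :: real
  assumes "\<And>t. 0 < t \<Longrightarrow> t \<le> 1 \<Longrightarrow> 0 \<le> t * a + t\<^sup>2 * c"
  shows "0 \<le> a"
proof (rule ccontr)
  assume "\<not> 0 \<le> a"
  define t where "t = min 1 (- a / (2 * (\<bar>c\<bar> + 1)))"
  have "0 < - a / (2 * (\<bar>c\<bar> + 1))" using \<open>\<not> 0 \<le> a\<close> by (intro divide_pos_pos) auto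
  hence t: "0 < t" "t \<le> 1" by (auto simp: t_def)
  have "t * \<bar>c\<bar> \<le> - a / (2 * (\<bar>c\<bar> + 1)) * (\<bar>c\<bar> + 1)"
    using t by (intro mult_mono) (auto simp: t_def)
  also have "\<dots> = - a / 2" by (simp add: field_simps)
  finally have tc: "t * \<bar>c\<bar> \<le> - a / 2" .
  have "t\<^sup>2 * c \<le> t * (t * \<bar>c\<bar>)" using t by (simp add: power2_eq_square mult_left_mono)
  also have "\<dots> \<le> t * (- a / 2)" using t by (intro mult_left_mono tc) simp
  finally have "t * a + t\<^sup>2 * c \<le> t * a / 2" by (simp add: field_simps)
  also have "\<dots> < 0" using t \<open>\<not> 0 \<le> a\<close> by (simp add: mult_pos_neg)
  finally show False using assms[OF t] by simp
qed

lemma Fatou_integrable: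
  fixes u :: "nat \<Rightarrow> 'a \<Rightarrow> real"
  assumes [measurable]: "f \<in> borel_measurable M"
    and nonneg: "\<And>n. AE x in M. 0 \<le> u n x" and int: "\<And>n. integrable M (u n)"
    and bounded: "\<And>n. integral\<^sup>L M (u n) \<le> C"
    and lim: "AE x in M. (\<lambda>n. u n x) \<longlonglongrightarrow> f x"
  shows "integrable M f" and "integral\<^sup>L M f \<le> C"
proof -
  have "AE x in M. \<forall>n. 0 \<le> u n x" using nonneg by (simp add: AE_all_countable)
  hence f_nonneg: "AE x in M. 0 \<le> f x"
    using lim by eventually_elim (auto intro: LIMSEQ_le_const)
  have "0 \<le> C" using integral_nonneg_AE[OF nonneg[of 0]] bounded[of 0] by linarith
  have "(\<integral>\<^sup>+x. ennreal (f x) \<partial>M) = (\<integral>\<^sup>+x. liminf (\<lambda>n. ennreal (u n x)) \<partial>M)"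
    using lim by (intro nn_integral_cong_AE) (auto elim!: eventually_mono intro: lim_imp_Liminf[symmetric] tendsto_ennrealI)
  also have "\<dots> \<le> liminf (\<lambda>n. \<integral>\<^sup>+x. ennreal (u n x) \<partial>M)"
    using int by (intro nn_integral_liminf) auto
  also have "\<dots> \<le> limsup (\<lambda>n. \<integral>\<^sup>+x. ennreal (u n x) \<partial>M)"
    by (rule Liminf_le_Limsup) simp
  also have "\<dots> \<le> ennreal C"
  proof (rule Limsup_bounded)
    have "(\<integral>\<^sup>+x. ennreal (u n x) \<partial>M) \<le> ennreal C" for n
      using bounded[of n] nn_integral_eq_integral[OF int[of n] nonneg[of n]] by (simp add: ennreal_leI)
    thus "\<forall>\<^sub>F n in sequentially. (\<integral>\<^sup>+x. ennreal (u n x) \<partial>M) \<le> ennreal C" by simp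
  qed
  finally have nn_f: "(\<integral>\<^sup>+x. ennreal (f x) \<partial>M) \<le> ennreal C" .
  show int_f: "integrable M f"
    by (rule integrableI_nonneg) (use f_nonneg nn_f in \<open>auto intro: le_less_trans[OF _ ennreal_less_top]\<close>)
  show "integral\<^sup>L M f \<le> C"
    using nn_f nn_integral_eq_integral[OF int_f f_nonneg] \<open>0 \<le> C\<close> by (simp add: ennreal_le_iff)
qed

lemma measure_ball_tendsto_singleton:
  fixes M :: "'a::metric_space measure"
  assumes "finite_measure M" and "sets M = sets borel"
  shows "(\<lambda>n. measure M (ball x (1 / Suc n))) \<longlonglongrightarrow> measure M {x}"
proof -
  have "range (\<lambda>n. ball x (1 / real (Suc n))) \<subseteq> sets M"
    unfolding assms(2) by (intro image_subsetI borel_open open_ball)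
  moreover have "decseq (\<lambda>n. ball x (1 / real (Suc n)))"
    unfolding decseq_def
  proof (intro allI impI)
    fix m n :: nat assume "m \<le> n"
    hence "1 / real (Suc n) \<le> 1 / real (Suc m)" by (intro divide_left_mono) auto
    thus "ball x (1 / real (Suc n)) \<subseteq> ball x (1 / real (Suc m))" by auto
  qed
  ultimately have "(\<lambda>n. measure M (ball x (1 / Suc n))) \<longlonglongrightarrow> measure M (\<Inter>n. ball x (1 / Suc n))"
    by (rule finite_measure.finite_Lim_measure_decseq[OF assms(1)])
  moreover have "(\<Inter>n. ball x (1 / real (Suc n))) = {x}"
  proof (intro equalityI subsetI)
    fix y assume y: "y \<in> (\<Inter>n. ball x (1 / real (Suc n)))"
    show "y \<in> {x}"
    proof (rule ccontr)
      assume "y \<notin> {x}"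
      hence "0 < dist x y" by simp
      then obtain n where "inverse (real (Suc n)) < dist x y" using reals_Archimedean by blast
      moreover have "y \<in> ball x (1 / real (Suc n))" using y by blast
      ultimately show False by (simp add: inverse_eq_divide)
    qed
  qed auto
  ultimately show ?thesis by simp
qed

text \<open>The radius is half a Lebesgue number of the cover of \<open>K\<close> by open sets of mass \<open>< c\<close>.\<close>
lemma uniformly_small_balls:
  fixes M :: "'a::metric_space measure"
  assumes "finite_measure M" and sets_M: "sets M = sets borel" and K: "compact K" and null: "emeasure M (UNIV - K) = 0"
    and atomless: "\<And>x. measure M {x} = 0" and c: "0 < c"
  obtains \<rho> where "\<rho> > 0" "\<And>z. measure M (ball z \<rho>) < c"
proof -
  let ?\<G> = "{U. open U \<and> measure M U < c}"
  have "\<exists>U\<in>?\<G>. x \<in> U" for x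
  proof -
    have "eventually (\<lambda>n. measure M (ball x (1 / Suc n)) < c) sequentially"
      using measure_ball_tendsto_singleton[OF \<open>finite_measure M\<close> sets_M, of x] atomless c by (auto intro: order_tendstoD)
    then obtain n where "measure M (ball x (1 / Suc n)) < c" by (auto dest: eventually_happens)
    thus ?thesis by (intro bexI[of _ "ball x (1 / Suc n)"]) auto
  qed
  hence "K \<subseteq> \<Union>?\<G>" by blast
  then obtain e where e: "0 < e" "\<And>x. x \<in> K \<Longrightarrow> \<exists>U\<in>?\<G>. ball x e \<subseteq> U"
    using Heine_Borel_lemma[OF K] by (metis (no_types, lifting) mem_Collect_eq)
  have "UNIV - K \<in> sets M" using compact_imp_closed[OF K] sets_M by (simp add: open_Diff)
  hence null': "measure M (UNIV - K) = 0" using null by (simp add: measure_def)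
  have "measure M (ball z (e / 2)) < c" for z
  proof (cases "ball z (e / 2) \<inter> K = {}")
    case True
    hence "measure M (ball z (e / 2)) \<le> measure M (UNIV - K)"
      using \<open>UNIV - K \<in> sets M\<close> by (intro finite_measure.finite_measure_mono[OF \<open>finite_measure M\<close>]) auto
    thus ?thesis using null' c by simp
  next
    case False
    then obtain y where y: "y \<in> K" "dist z y < e / 2" by auto
    then obtain U where U: "open U" "measure M U < c" "ball y e \<subseteq> U" using e(2) by blast
    have "ball z (e / 2) \<subseteq> ball y e"
    proof
      fix u assume "u \<in> ball z (e / 2)"
      with dist_triangle_half_r[OF y(2), of u] show "u \<in> ball y e" by simp
    qed
    hence "measure M (ball z (e / 2)) \<le> measure M U"
      using U sets_M by (intro finite_measure.finite_measure_mono[OF \<open>finite_measure M\<close>]) auto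
    thus ?thesis using U(2) by simp
  qed
  thus ?thesis using that[of "e / 2"] e(1) by simp
qed

section \<open>Products of linear factors\<close>

lemma norm_coeff_prod_linear_le:
  fixes A :: "complex multiset" and R :: real
  assumes R: "0 < R"
  shows "cmod (coeff (\<Prod>a\<in>#A. [:-a, 1:]) k) * R ^ k \<le> real (size A choose k) * (\<Prod>a\<in>#A. max R (cmod a))"
proof (induction A arbitrary: k)
  case empty thus ?case by (cases k) auto
next
  case (add a A)
  define Q where "Q = (\<Prod>a\<in>#A. [:-a, 1:])"
  define m where "m = max R (cmod a)"
  define Pr where "Pr = (\<Prod>a\<in>#A. max R (cmod a))"
  have IH: "cmod (coeff Q j) * R ^ j \<le> real (size A choose j) * Pr" for j
    using add.IH by (simp add: Q_def Pr_def)
  have m: "R \<le> m" "cmod a \<le> m" by (auto simp: m_def)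
  have Pr: "0 \<le> Pr" unfolding Pr_def using R by (induction A) auto
  have prod: "(\<Prod>a\<in>#add_mset a A. [:-a, 1:]) = smult (- a) Q + pCons 0 Q" by (simp add: Q_def)
  show ?case
  proof (cases k)
    case 0
    have "cmod (coeff (\<Prod>a\<in>#add_mset a A. [:-a, 1:]) k) * R ^ k = cmod a * cmod (coeff Q 0)"
      unfolding 0 prod by (simp add: norm_mult)
    also have "\<dots> \<le> m * Pr" using IH[of 0] m Pr R by (intro mult_mono) auto
    also have "\<dots> = real (size (add_mset a A) choose k) * (\<Prod>a\<in>#add_mset a A. max R (cmod a))"
      using 0 by (simp add: m_def Pr_def)
    finally show ?thesis .
  next
    case (Suc j)
    have "cmod (coeff (\<Prod>a\<in>#add_mset a A. [:-a, 1:]) k) = cmod (coeff Q j - a * coeff Q k)"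
      unfolding Suc prod by simp
    also have "\<dots> \<le> cmod a * cmod (coeff Q k) + cmod (coeff Q j)"
      using norm_triangle_ineq4[of "coeff Q j" "a * coeff Q k"] by (simp add: norm_mult)
    finally have "cmod (coeff (\<Prod>a\<in>#add_mset a A. [:-a, 1:]) k) * R ^ k
        \<le> (cmod a * cmod (coeff Q k) + cmod (coeff Q j)) * R ^ k"
      using R by (intro mult_right_mono) auto
    also have "\<dots> = cmod a * (cmod (coeff Q k) * R ^ k) + R * (cmod (coeff Q j) * R ^ j)"
      using Suc by (simp add: algebra_simps)
    also have "\<dots> \<le> m * (real (size A choose k) * Pr) + m * (real (size A choose j) * Pr)"
      using m R by (intro add_mono mult_mono IH) auto
    also have "\<dots> = real (size (add_mset a A) choose k) * (\<Prod>a\<in>#add_mset a A. max R (cmod a))"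
      using Suc by (simp add: algebra_simps m_def Pr_def)
    finally show ?thesis .
  qed
qed

lemma ln_norm_poly_prod_linear:
  fixes A :: "complex multiset"
  assumes "z \<notin># A"
  shows "ln (cmod (poly (\<Prod>a\<in>#A. [:-a, 1:]) z)) = (\<Sum>a\<in>#A. ln (cmod (z - a)))"
proof -
  have "poly (\<Prod>a\<in>#A. [:-a, 1:]) z \<noteq> 0 \<and>
      ln (cmod (poly (\<Prod>a\<in>#A. [:-a, 1:]) z)) = (\<Sum>a\<in>#A. ln (cmod (z - a)))"
    using assms by (induction A) (auto simp: norm_mult ln_mult left_diff_distrib[symmetric])
  thus ?thesis ..
qed

lemma exp_sum_mset: "exp (\<Sum>a\<in>#A. f a) = (\<Prod>a\<in>#A. exp (f a) :: real)"
  by (induction A) (auto simp: exp_add)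

section \<open>Measures of minimal logarithmic energy\<close>

text \<open>For non-polar \<open>K\<close> these are exactly the equilibrium measures, \<open>V\<close> being the Robin constant.\<close>
locale energy_minimizer =
  fixes K :: "complex set" and \<mu> :: "complex measure" and V :: real
  assumes compact_K: "compact K"
    and prob_on_K: "prob_on K \<mu>"
    and log_energy_eq: "log_energy \<mu> = ereal V"
    and log_energy_minimal: "\<And>\<nu>. prob_on K \<nu> \<Longrightarrow> ereal V \<le> log_energy \<nu>"
begin

sublocale M: prob_space \<mu>
  using prob_on_K by (simp add: prob_on_def)

sublocale MM: pair_prob_space \<mu> \<mu> ..

lemma sets_\<mu> [measurable_cong]: "sets \<mu> = sets borel"
  using prob_on_K by (simp add: prob_on_def)

lemma space_\<mu> [simp]: "space \<mu> = UNIV"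
  using sets_eq_imp_space_eq[OF sets_\<mu>] by simp

lemma measure_UNIV [simp]: "measure \<mu> UNIV = 1"
  using M.prob_space by simp

lemma energy_finite:
  shows AE_off_diagonal: "AE p in \<mu> \<Otimes>\<^sub>M \<mu>. fst p \<noteq> snd p"
    and integrable_kernel: "integrable (\<mu> \<Otimes>\<^sub>M \<mu>) (\<lambda>p. - ln (cmod (fst p - snd p)))"
    and V_eq: "V = (\<integral>p. - ln (cmod (fst p - snd p)) \<partial>(\<mu> \<Otimes>\<^sub>M \<mu>))"
  using log_energy_eq by (auto simp: log_energy_def split: if_splits)

lemma emeasure_outside_K: "emeasure \<mu> (UNIV - K) = 0"
  using prob_on_K by (simp add: prob_on_def)

lemma AE_in_K: "AE z in \<mu>. z \<in> K"
proof -
  have "UNIV - K \<in> null_sets \<mu>"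
    using prob_on_K compact_imp_closed[OF compact_K] by (auto simp: prob_on_def sets_\<mu> open_Diff)
  from AE_not_in[OF this] show ?thesis by simp
qed

text \<open>Finite energy forces the diagonal, hence every \<open>{a} \<times> {a}\<close>, to be a null set.\<close>
lemma emeasure_singleton: "emeasure \<mu> {a} = 0"
proof -
  have "{p::complex \<times> complex. fst p = snd p} \<in> sets (borel \<Otimes>\<^sub>M borel)"
    unfolding borel_prod by (intro borel_closed closed_Collect_eq continuous_intros)
  hence "{p. fst p = snd p} \<in> null_sets (\<mu> \<Otimes>\<^sub>M \<mu>)"
    using AE_iff_measurable[of "{p. fst p = snd p}" "\<mu> \<Otimes>\<^sub>M \<mu>" "\<lambda>p. fst p \<noteq> snd p"] AE_off_diagonal
    by (auto simp: space_pair_measure)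
  moreover have "{a} \<times> {a} \<in> sets (\<mu> \<Otimes>\<^sub>M \<mu>)" by (rule pair_measureI) (simp_all add: sets_\<mu>)
  ultimately have "{a} \<times> {a} \<in> null_sets (\<mu> \<Otimes>\<^sub>M \<mu>)" by (rule null_sets_subset) auto
  from null_setsD1[OF this] have "emeasure \<mu> {a} * emeasure \<mu> {a} = 0"
    using M.emeasure_pair_measure_Times[of "{a}" \<mu> "{a}"] by (simp add: sets_\<mu>)
  thus ?thesis by simp
qed

lemma AE_neq: "AE y in \<mu>. y \<noteq> w"
  using AE_not_in[of "{w}" \<mu>] emeasure_singleton[of w] by (simp add: null_sets_def sets_\<mu>)

definition potential :: "complex \<Rightarrow> real" where
  "potential x = (\<integral>y. - ln (cmod (x - y)) \<partial>\<mu>)"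

lemma borel_measurable_potential [measurable]: "potential \<in> borel_measurable borel"
  unfolding potential_def by (rule M.borel_measurable_lebesgue_integral) measurable

lemma integrable_potential: "integrable \<mu> potential"
  using MM.integrable_fst'[OF integrable_kernel] unfolding potential_def by simp

lemma integral_potential: "(\<integral>x. potential x \<partial>\<mu>) = V"
  using MM.integral_fst'[OF integrable_kernel] unfolding potential_def V_eq by simp

lemma AE_integrable_kernel: "AE x in \<mu>. integrable \<mu> (\<lambda>y. - ln (cmod (x - y)))"
  using MM.AE_integrable_fst'[OF integrable_kernel] by simp

lemma prob_on_density:
  assumes [measurable]: "f \<in> borel_measurable borel"
    and nonneg: "\<And>x. 0 \<le> f x" and "integrable \<mu> f" and "integral\<^sup>L \<mu> f = 1"
  shows "prob_on K (density \<mu> f)"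
proof -
  have "emeasure (density \<mu> f) UNIV = ennreal (integral\<^sup>L \<mu> f)"
    using assms by (subst emeasure_density) (auto simp: nn_integral_eq_integral)
  hence "prob_space (density \<mu> f)"
    using assms by (intro prob_spaceI) auto
  moreover have "emeasure (density \<mu> f) (UNIV - K) = 0"
  proof -
    have "UNIV - K \<in> sets \<mu>" using compact_imp_closed[OF compact_K] by (simp add: sets_\<mu> open_Diff)
    hence "emeasure (density \<mu> f) (UNIV - K) = (\<integral>\<^sup>+ x. ennreal (f x) * indicator (UNIV - K) x \<partial>\<mu>)"
      by (rule emeasure_density[rotated]) measurable
    also have "\<dots> = (\<integral>\<^sup>+ x. 0 \<partial>\<mu>)"
      by (rule nn_integral_cong_AE) (use AE_in_K in \<open>auto elim!: eventually_mono\<close>)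
    finally show ?thesis by simp
  qed
  ultimately show ?thesis by (simp add: prob_on_def sets_\<mu>)
qed

lemma V_le_integral_density_kernel:
  assumes [measurable]: "f \<in> borel_measurable borel"
    and nonneg: "\<And>x. 0 \<le> f x" and bounded: "\<And>x. f x \<le> B" and "integral\<^sup>L \<mu> f = 1"
  shows "V \<le> (\<integral>p. f (fst p) * f (snd p) * - ln (cmod (fst p - snd p)) \<partial>(\<mu> \<Otimes>\<^sub>M \<mu>))"
proof -
  define \<nu> where "\<nu> = density \<mu> f"
  have "integrable \<mu> f"
    using nonneg bounded by (intro M.integrable_const_bound[of _ B]) auto
  hence "prob_on K \<nu>" unfolding \<nu>_def using assms by (intro prob_on_density) auto
  then interpret N: prob_space \<nu> by (simp add: prob_on_def)
  have pair: "\<nu> \<Otimes>\<^sub>M \<nu> = density (\<mu> \<Otimes>\<^sub>M \<mu>) (\<lambda>p. ennreal (f (fst p) * f (snd p)))"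
  proof -
    have "\<nu> \<Otimes>\<^sub>M \<nu> = density (\<mu> \<Otimes>\<^sub>M \<mu>) (\<lambda>(x,y). ennreal (f x) * ennreal (f y))"
      unfolding \<nu>_def
      by (rule pair_measure_density) (auto simp: M.sigma_finite_measure_axioms N.sigma_finite_measure_axioms[unfolded \<nu>_def])
    thus ?thesis by (simp add: ennreal_mult nonneg case_prod_beta')
  qed
  have B: "0 \<le> B" using nonneg[of 0] bounded[of 0] by simp
  have "integrable (\<mu> \<Otimes>\<^sub>M \<mu>) (\<lambda>p. f (fst p) * f (snd p) * - ln (cmod (fst p - snd p)))"
  proof (rule Bochner_Integration.integrable_bound)
    show "integrable (\<mu> \<Otimes>\<^sub>M \<mu>) (\<lambda>p. (B * B) * - ln (cmod (fst p - snd p)))"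
      using integrable_kernel by simp
    show "AE p in \<mu> \<Otimes>\<^sub>M \<mu>. norm (f (fst p) * f (snd p) * - ln (cmod (fst p - snd p)))
        \<le> norm ((B * B) * - ln (cmod (fst p - snd p)))"
      using B nonneg bounded by (auto simp: abs_mult intro!: mult_right_mono mult_mono)
  qed measurable
  hence "integrable (\<nu> \<Otimes>\<^sub>M \<nu>) (\<lambda>p. - ln (cmod (fst p - snd p)))"
    unfolding pair by (subst integrable_density) (auto simp: nonneg)
  moreover have "AE p in \<nu> \<Otimes>\<^sub>M \<nu>. fst p \<noteq> snd p"
    unfolding pair by (subst AE_density) (auto intro: eventually_mono[OF AE_off_diagonal])
  moreover have "(\<integral>p. - ln (cmod (fst p - snd p)) \<partial>(\<nu> \<Otimes>\<^sub>M \<nu>))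
      = (\<integral>p. f (fst p) * f (snd p) * - ln (cmod (fst p - snd p)) \<partial>(\<mu> \<Otimes>\<^sub>M \<mu>))"
    unfolding pair by (subst integral_density) (auto simp: nonneg mult.assoc)
  ultimately show ?thesis
    using log_energy_minimal[OF \<open>prob_on K \<nu>\<close>] by (simp add: log_energy_def)
qed

lemma kernel_weighted:
  fixes g :: "complex \<Rightarrow> real"
  assumes [measurable]: "g \<in> borel_measurable borel" and bounded: "\<And>x. \<bar>g x\<bar> \<le> 1"
  shows integrable_kernel_weighted_fst:
      "integrable (\<mu> \<Otimes>\<^sub>M \<mu>) (\<lambda>p. g (fst p) * - ln (cmod (fst p - snd p)))"
    and integrable_kernel_weighted_snd:
      "integrable (\<mu> \<Otimes>\<^sub>M \<mu>) (\<lambda>p. g (snd p) * - ln (cmod (fst p - snd p)))"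
    and integral_kernel_weighted_fst:
      "(\<integral>p. g (fst p) * - ln (cmod (fst p - snd p)) \<partial>(\<mu> \<Otimes>\<^sub>M \<mu>)) = (\<integral>x. g x * potential x \<partial>\<mu>)"
    and integral_kernel_weighted_snd:
      "(\<integral>p. g (snd p) * - ln (cmod (fst p - snd p)) \<partial>(\<mu> \<Otimes>\<^sub>M \<mu>)) = (\<integral>x. g x * potential x \<partial>\<mu>)"
proof -
  show int_fst: "integrable (\<mu> \<Otimes>\<^sub>M \<mu>) (\<lambda>p. g (fst p) * - ln (cmod (fst p - snd p)))"
   and "integrable (\<mu> \<Otimes>\<^sub>M \<mu>) (\<lambda>p. g (snd p) * - ln (cmod (fst p - snd p)))"
    by (rule Bochner_Integration.integrable_bound[OF integrable_kernel];
        auto intro!: mult_left_le_one_le simp: abs_mult bounded)+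
  show fst: "(\<integral>p. g (fst p) * - ln (cmod (fst p - snd p)) \<partial>(\<mu> \<Otimes>\<^sub>M \<mu>)) = (\<integral>x. g x * potential x \<partial>\<mu>)"
    using MM.integral_fst'[OF int_fst] by (simp add: potential_def)
  have "(\<integral>p. g (snd p) * - ln (cmod (fst p - snd p)) \<partial>(\<mu> \<Otimes>\<^sub>M \<mu>))
      = (\<integral>(x,y). g (fst (y,x)) * - ln (cmod (fst (y,x) - snd (y,x))) \<partial>(\<mu> \<Otimes>\<^sub>M \<mu>))"
    by (rule Bochner_Integration.integral_cong) (auto simp: norm_minus_commute)
  also have "\<dots> = (\<integral>p. g (fst p) * - ln (cmod (fst p - snd p)) \<partial>(\<mu> \<Otimes>\<^sub>M \<mu>))"
    by (rule MM.integral_product_swap) measurable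
  finally show "(\<integral>p. g (snd p) * - ln (cmod (fst p - snd p)) \<partial>(\<mu> \<Otimes>\<^sub>M \<mu>)) = (\<integral>x. g x * potential x \<partial>\<mu>)"
    using fst by simp
qed

subsection \<open>Frostman's theorem\<close>

text \<open>First variation of the energy in the direction of the signed density \<open>g\<close>: the energy of
  \<open>(1 + t g) \<mu>\<close> is \<open>V + 2 t \<integral> g U d\<mu> + O(t\<^sup>2)\<close>.\<close>
lemma integral_potential_perturbation_nonneg:
  fixes g :: "complex \<Rightarrow> real"
  assumes [measurable]: "g \<in> borel_measurable borel"
    and bounded: "\<And>x. \<bar>g x\<bar> \<le> 1" and mean_zero: "integral\<^sup>L \<mu> g = 0"
  shows "0 \<le> (\<integral>x. g x * potential x \<partial>\<mu>)"
proof -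
  define k where "k p = - ln (cmod (fst p - snd p))" for p :: "complex \<times> complex"
  define A where "A = (\<integral>x. g x * potential x \<partial>\<mu>)"
  define C where "C = (\<integral>p. g (fst p) * g (snd p) * k p \<partial>(\<mu> \<Otimes>\<^sub>M \<mu>))"
  have int_g: "integrable \<mu> g" using bounded by (intro M.integrable_const_bound[of _ 1]) auto
  note weighted = kernel_weighted[OF assms(1) bounded]
  have int_C: "integrable (\<mu> \<Otimes>\<^sub>M \<mu>) (\<lambda>p. g (fst p) * g (snd p) * k p)"
    unfolding k_def
    by (rule Bochner_Integration.integrable_bound[OF integrable_kernel])
       (auto intro!: mult_left_le_one_le simp: abs_mult bounded mult_le_one)
  have "0 \<le> t * (2 * A) + t\<^sup>2 * C" if t: "0 < t" "t \<le> 1" for t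
  proof -
    define f where "f x = 1 + t * g x" for x
    have f_nonneg: "0 \<le> f x" and f_le: "f x \<le> 2" for x
    proof -
      have "\<bar>t * g x\<bar> \<le> 1" using bounded[of x] t by (simp add: abs_mult mult_le_one)
      thus "0 \<le> f x" "f x \<le> 2" by (auto simp: f_def abs_le_iff)
    qed
    have [measurable]: "f \<in> borel_measurable borel" unfolding f_def by measurable
    have "integral\<^sup>L \<mu> f = 1"
      using int_g mean_zero unfolding f_def by (simp add: Bochner_Integration.integral_add)
    hence "V \<le> (\<integral>p. f (fst p) * f (snd p) * k p \<partial>(\<mu> \<Otimes>\<^sub>M \<mu>))"
      unfolding k_def using f_nonneg f_le by (intro V_le_integral_density_kernel) auto
    also have "(\<lambda>p. f (fst p) * f (snd p) * k p) = (\<lambda>p. k p + t * (g (fst p) * k p)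
        + t * (g (snd p) * k p) + t\<^sup>2 * (g (fst p) * g (snd p) * k p))"
      by (auto simp: f_def algebra_simps power2_eq_square)
    also have "(\<integral>p. \<dots> p \<partial>(\<mu> \<Otimes>\<^sub>M \<mu>)) = (\<integral>p. k p \<partial>(\<mu> \<Otimes>\<^sub>M \<mu>))
        + t * (\<integral>p. g (fst p) * k p \<partial>(\<mu> \<Otimes>\<^sub>M \<mu>)) + t * (\<integral>p. g (snd p) * k p \<partial>(\<mu> \<Otimes>\<^sub>M \<mu>)) + t\<^sup>2 * C"
      using integrable_kernel weighted(1,2) int_C unfolding k_def C_def
      by (simp add: Bochner_Integration.integral_add Bochner_Integration.integrable_add)
    also have "\<dots> = V + t * A + t * A + t\<^sup>2 * C"
      unfolding k_def A_def V_eq weighted(3,4) ..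
    finally show ?thesis by (simp add: algebra_simps)
  qed
  from first_order_coeff_nonneg[OF this] show ?thesis by (simp add: A_def)
qed

lemma integral_centered_indicator_potential:
  assumes [measurable]: "E \<in> sets borel"
  shows "(\<integral>x. (indicator E x - measure \<mu> E) * potential x \<partial>\<mu>) = (\<integral>x. indicator E x * (potential x - V) \<partial>\<mu>)"
proof -
  have int_E: "integrable \<mu> (indicator E :: complex \<Rightarrow> real)"
    by (intro integrable_real_indicator) (auto simp: sets_\<mu> less_top[symmetric] M.emeasure_finite)
  have int_EU: "integrable \<mu> (\<lambda>x. indicator E x * potential x)"
    by (rule Bochner_Integration.integrable_bound[OF integrable_potential]) (auto simp: indicator_def)
  have "(\<lambda>x. (indicator E x - measure \<mu> E) * potential x) = (\<lambda>x. indicator E x * potential x - measure \<mu> E * potential x)"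
    by (auto simp: algebra_simps)
  moreover have "(\<lambda>x. indicator E x * (potential x - V)) = (\<lambda>x. indicator E x * potential x - V * indicator E x)"
    by (auto simp: algebra_simps)
  ultimately show ?thesis
    using int_E int_EU integrable_potential integral_potential by simp
qed

lemma AE_potential_ge: "AE x in \<mu>. V \<le> potential x"
proof -
  define E where "E = {x. potential x < V}"
  have E [measurable]: "E \<in> sets borel" unfolding E_def by measurable
  have "integral\<^sup>L \<mu> (\<lambda>x. indicator E x - measure \<mu> E) = 0"
    by (subst Bochner_Integration.integral_diff)
       (auto intro!: integrable_real_indicator simp: sets_\<mu> less_top[symmetric] M.emeasure_finite)
  hence "0 \<le> (\<integral>x. (indicator E x - measure \<mu> E) * potential x \<partial>\<mu>)"
    by (intro integral_potential_perturbation_nonneg) (auto simp: indicator_def)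
  hence "0 \<le> (\<integral>x. indicator E x * (potential x - V) \<partial>\<mu>)"
    by (simp only: integral_centered_indicator_potential[OF E])
  define h where "h x = - (indicator E x * (potential x - V))" for x
  have h_nonneg: "AE x in \<mu>. 0 \<le> h x" by (auto simp: h_def indicator_def E_def)
  have int_h: "integrable \<mu> h"
    unfolding h_def by (rule Bochner_Integration.integrable_bound[of _ "\<lambda>x. V - potential x"])
      (auto simp: indicator_def E_def integrable_potential)
  have "integral\<^sup>L \<mu> h = 0"
    using integral_nonneg_AE[OF h_nonneg] \<open>0 \<le> (\<integral>x. indicator E x * (potential x - V) \<partial>\<mu>)\<close>
    unfolding h_def by simp
  hence "AE x in \<mu>. h x = 0" using integral_nonneg_eq_0_iff_AE[OF int_h h_nonneg] by simp
  thus ?thesis by (rule eventually_mono) (auto simp: h_def indicator_def E_def)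
qed

lemma AE_potential_eq: "AE x in \<mu>. potential x = V"
proof -
  have "AE x in \<mu>. 0 \<le> potential x - V" using AE_potential_ge by (auto elim: eventually_mono)
  moreover have "(\<integral>x. potential x - V \<partial>\<mu>) = 0"
    using integral_potential integrable_potential by (simp add: Bochner_Integration.integral_diff)
  ultimately have "AE x in \<mu>. potential x - V = 0"
    using integral_nonneg_eq_0_iff_AE[of \<mu> "\<lambda>x. potential x - V"] integrable_potential by simp
  thus ?thesis by (auto elim: eventually_mono)
qed

definition radius :: real where
  "radius = Sup (cmod ` K)"

lemma norm_le_radius: "y \<in> K \<Longrightarrow> cmod y \<le> radius"
  unfolding radius_def
  by (intro cSup_upper bounded_imp_bdd_above compact_imp_bounded compact_continuous_image
        continuous_intros compact_K) auto

lemma K_nonempty: "K \<noteq> {}"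
  using AE_in_K M.AE_False by auto

lemma radius_nonneg: "0 \<le> radius"
  using K_nonempty norm_le_radius norm_ge_zero order_trans by blast

lemma ln_dist_le: "x \<in> K \<Longrightarrow> y \<in> K \<Longrightarrow> ln (cmod (x - y)) \<le> ln (2 * radius + 1)"
  using norm_triangle_ineq4[of x y] norm_le_radius[of x] norm_le_radius[of y] radius_nonneg
  by (cases "x = y") (auto intro!: ln_mono)

text \<open>The potential is a Bochner integral, hence \<open>0\<close> where the kernel is not integrable;
  the integrability condition keeps such junk values out.\<close>
definition sublevel :: "complex set" where
  "sublevel = {x \<in> K. integrable \<mu> (\<lambda>y. - ln (cmod (x - y))) \<and> potential x \<le> V}"

lemma sublevel_subset: "sublevel \<subseteq> K"
  by (auto simp: sublevel_def)

lemma AE_in_sublevel: "AE x in \<mu>. x \<in> sublevel"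
  using AE_in_K AE_potential_eq AE_integrable_kernel by eventually_elim (auto simp: sublevel_def)

lemma sublevel_nonempty: "sublevel \<noteq> {}"
  using AE_in_sublevel M.AE_False by auto

lemma closure_sublevel_subset: "closure sublevel \<subseteq> K"
  using closure_minimal[OF sublevel_subset compact_imp_closed[OF compact_K]] .

lemma infdist_sublevel_pos: "w \<notin> closure sublevel \<Longrightarrow> 0 < infdist w sublevel"
  using in_closure_iff_infdist_zero[OF sublevel_nonempty, of w] infdist_nonneg[of w sublevel] by auto

lemma AE_infdist_sublevel_le: "AE y in \<mu>. infdist w sublevel \<le> cmod (w - y)"
  using AE_in_sublevel by eventually_elim (metis dist_norm infdist_le)

lemma infdist_sublevel_ge: "cmod w - radius \<le> infdist w sublevel"
  unfolding infdist_notempty[OF sublevel_nonempty]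
proof (rule cINF_greatest[OF sublevel_nonempty])
  fix y assume "y \<in> sublevel"
  hence "cmod y \<le> radius" using norm_le_radius sublevel_subset by auto
  thus "cmod w - radius \<le> dist w y" using norm_triangle_ineq2[of w y] by (simp add: dist_norm)
qed

lemma integrable_kernel_if_AE_dist_ge:
  assumes d: "0 < d" and "AE y in \<mu>. d \<le> cmod (w - y)"
  shows "integrable \<mu> (\<lambda>y. - ln (cmod (w - y)))"
proof (rule M.integrable_const_bound)
  show "AE y in \<mu>. norm (- ln (cmod (w - y))) \<le> \<bar>ln d\<bar> + \<bar>ln (cmod w + radius)\<bar>"
    using assms(2) AE_in_K
  proof eventually_elim
    case (elim y)
    have "cmod (w - y) \<le> cmod w + radius"
      using norm_triangle_ineq4[of w y] norm_le_radius[OF elim(2)] by simp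
    thus ?case using abs_ln_le_abs_ln_bounds[OF d elim(1)] by simp
  qed
qed measurable

lemma integrable_kernel_off_closure:
  "w \<notin> closure sublevel \<Longrightarrow> integrable \<mu> (\<lambda>y. - ln (cmod (w - y)))"
  using integrable_kernel_if_AE_dist_ge[OF infdist_sublevel_pos AE_infdist_sublevel_le] .

lemma AE_dist_ge_if_infdist_ge:
  "d \<le> infdist w sublevel \<Longrightarrow> AE y in \<mu>. d \<le> cmod (w - y)"
  using AE_infdist_sublevel_le[of w] by eventually_elim simp

lemma potential_lipschitz:
  assumes d: "0 < d" "d \<le> infdist w sublevel" "d \<le> infdist w' sublevel"
  shows "\<bar>potential w - potential w'\<bar> \<le> dist w w' / d"
proof -
  note AE_d = AE_dist_ge_if_infdist_ge[OF d(2)] AE_dist_ge_if_infdist_ge[OF d(3)]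
  note int = integrable_kernel_if_AE_dist_ge[OF d(1) AE_d(1)] integrable_kernel_if_AE_dist_ge[OF d(1) AE_d(2)]
  define h where "h y = ln (cmod (w' - y)) - ln (cmod (w - y))" for y
  have int_h: "integrable \<mu> h" unfolding h_def using int by simp
  have bound: "AE y in \<mu>. \<bar>h y\<bar> \<le> dist w w' / d"
    using AE_d
  proof eventually_elim
    case (elim y)
    have "\<bar>h y\<bar> \<le> \<bar>cmod (w' - y) - cmod (w - y)\<bar> / d"
      unfolding h_def using abs_ln_diff_le[OF d(1) elim(2) elim(1)] .
    also have "\<bar>cmod (w' - y) - cmod (w - y)\<bar> \<le> dist w w'"
      using norm_triangle_ineq3[of "w' - y" "w - y"] by (simp add: dist_norm norm_minus_commute)
    hence "\<bar>cmod (w' - y) - cmod (w - y)\<bar> / d \<le> dist w w' / d"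
      using d(1) by (simp add: divide_right_mono)
    finally show ?case .
  qed
  have "potential w - potential w' = integral\<^sup>L \<mu> h"
    unfolding potential_def h_def using int by (simp add: Bochner_Integration.integral_diff)
  moreover have "\<bar>integral\<^sup>L \<mu> h\<bar> \<le> (\<integral>y. \<bar>h y\<bar> \<partial>\<mu>)"
    using integral_norm_bound[of \<mu> h] by simp
  moreover have "(\<integral>y. \<bar>h y\<bar> \<partial>\<mu>) \<le> dist w w' / d"
    using int_h bound by (intro M.integral_le_const) auto
  ultimately show ?thesis by (metis order_trans)
qed

lemma continuous_on_potential:
  assumes "0 < d" shows "continuous_on {w. d \<le> infdist w sublevel} potential"
proof -
  have "lipschitz_on (1 / d) {w. d \<le> infdist w sublevel} potential"
    unfolding lipschitz_on_def using potential_lipschitz[OF assms] assms by (auto simp: dist_real_def)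
  thus ?thesis by (rule lipschitz_on_continuous_on)
qed

text \<open>Lower semicontinuity of the potential along sequences in the sublevel set, by Fatou's
  lemma applied to the kernel shifted by \<open>ln (2 radius + 1)\<close>, which is nonnegative on \<open>K\<close>.\<close>
lemma potential_le_if_tendsto:
  assumes \<zeta>: "\<And>n. \<zeta> n \<in> sublevel" "\<zeta> \<longlonglongrightarrow> w"
  shows "integrable \<mu> (\<lambda>y. - ln (cmod (w - y)))" and "potential w \<le> V"
proof -
  define D where "D = 2 * radius + 1"
  have \<zeta>K: "\<zeta> n \<in> K" and int_n: "integrable \<mu> (\<lambda>y. - ln (cmod (\<zeta> n - y)))"
    and le_V: "potential (\<zeta> n) \<le> V" for n
    using \<zeta>(1)[of n] by (auto simp: sublevel_def)
  have nonneg: "AE y in \<mu>. 0 \<le> - ln (cmod (\<zeta> n - y)) + ln D" for n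
    using AE_in_K by eventually_elim (use ln_dist_le[OF \<zeta>K] in \<open>simp add: D_def\<close>)
  have int: "integrable \<mu> (\<lambda>y. - ln (cmod (\<zeta> n - y)) + ln D)" for n using int_n by simp
  have bounded: "(\<integral>y. - ln (cmod (\<zeta> n - y)) + ln D \<partial>\<mu>) \<le> V + ln D" for n
    using int_n[of n] le_V[of n] by (simp add: potential_def)
  have lim: "AE y in \<mu>. (\<lambda>n. - ln (cmod (\<zeta> n - y)) + ln D) \<longlonglongrightarrow> - ln (cmod (w - y)) + ln D"
    using AE_neq[of w] by eventually_elim (intro tendsto_intros \<zeta>(2), simp)
  have "(\<lambda>y. - ln (cmod (w - y)) + ln D) \<in> borel_measurable \<mu>" by measurable
  note Fatou = Fatou_integrable[OF this nonneg int bounded lim]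
  from Bochner_Integration.integrable_diff[OF Fatou(1) M.integrable_const[of "ln D"]]
  show int_w: "integrable \<mu> (\<lambda>y. - ln (cmod (w - y)))" by simp
  thus "potential w \<le> V" using Fatou(2) by (simp add: potential_def)
qed

lemma potential_le_on_closure:
  assumes "w \<in> closure sublevel"
  shows "integrable \<mu> (\<lambda>y. - ln (cmod (w - y)))" and "potential w \<le> V"
  using assms potential_le_if_tendsto by (meson closure_sequential)+

text \<open>Comparison of the potential at \<open>w\<close> with that at a nearby point \<open>\<zeta>\<close> of the sublevel set:
  the kernels differ by at most \<open>2\<close> near \<open>\<zeta>\<close> and by \<open>O(s / \<rho>)\<close> away from it.\<close>
lemma potential_le_near_point:
  assumes \<zeta>: "\<zeta> \<in> sublevel" and w: "w \<notin> closure sublevel"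
    and s: "s = infdist w sublevel" "dist w \<zeta> < 2 * s" "4 * s \<le> \<rho>"
  shows "potential w \<le> V + 2 * measure \<mu> (ball \<zeta> \<rho>) + 4 * s / \<rho>"
proof -
  have s0: "0 < s" using infdist_sublevel_pos[OF w] s(1) by simp
  define \<phi> where "\<phi> y = 2 * indicator (ball \<zeta> \<rho>) y + 4 * s / \<rho>" for y :: complex
  have int_\<phi>: "integrable \<mu> \<phi>" and "integral\<^sup>L \<mu> \<phi> = 2 * measure \<mu> (ball \<zeta> \<rho>) + 4 * s / \<rho>"
    unfolding \<phi>_def by (auto simp: sets_\<mu> less_top[symmetric] M.emeasure_finite)
  moreover have int_w: "integrable \<mu> (\<lambda>y. - ln (cmod (w - y)))"
    by (rule integrable_kernel_off_closure[OF w])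
  moreover have int_\<zeta>: "integrable \<mu> (\<lambda>y. - ln (cmod (\<zeta> - y)))" using \<zeta> by (simp add: sublevel_def)
  moreover have "AE y in \<mu>. ln (cmod (\<zeta> - y)) - ln (cmod (w - y)) \<le> \<phi> y"
    using AE_infdist_sublevel_le[of w] AE_neq[of \<zeta>]
  proof eventually_elim
    case (elim y)
    have a: "0 < cmod (\<zeta> - y)" using elim(2) by simp
    have ab: "cmod (\<zeta> - y) \<le> cmod (w - y) + 2 * s"
      using norm_triangle_ineq[of "\<zeta> - w" "w - y"] s(2) by (simp add: dist_norm norm_minus_commute)
    note near = ln_diff_le_of_near[OF a s0 elim(1)[folded s(1)] ab]
    show ?case
    proof (cases "y \<in> ball \<zeta> \<rho>")
      case True
      have "0 \<le> 4 * s / \<rho>" using s0 s(3) by simp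
      thus ?thesis using True near(1) by (simp add: \<phi>_def)
    next
      case False thus ?thesis using near(2)[OF s(3)] by (simp add: \<phi>_def dist_norm)
    qed
  qed
  ultimately have "potential w - potential \<zeta> \<le> 2 * measure \<mu> (ball \<zeta> \<rho>) + 4 * s / \<rho>"
    unfolding potential_def using integral_mono_AE[of \<mu> "\<lambda>y. ln (cmod (\<zeta> - y)) - ln (cmod (w - y))" \<phi>]
    by (simp add: Bochner_Integration.integral_diff)
  thus ?thesis using \<zeta> by (simp add: sublevel_def)
qed

lemma potential_le_near_sublevel:
  assumes "0 < \<eta>"
  obtains \<delta> where "0 < \<delta>"
    and "\<And>w. w \<notin> closure sublevel \<Longrightarrow> infdist w sublevel \<le> \<delta> \<Longrightarrow> potential w \<le> V + \<eta>"
proof -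
  have "measure \<mu> {x} = 0" for x using emeasure_singleton[of x] by (simp add: measure_def)
  moreover have "0 < \<eta> / 4" using assms by simp
  ultimately obtain \<rho> where \<rho>: "0 < \<rho>" "\<And>z. measure \<mu> (ball z \<rho>) < \<eta> / 4"
    using uniformly_small_balls[OF M.finite_measure_axioms sets_\<mu> compact_K emeasure_outside_K] by blast
  define \<delta> where "\<delta> = min (\<rho> / 4) (\<eta> * \<rho> / 8)"
  have "potential w \<le> V + \<eta>" if w: "w \<notin> closure sublevel" "infdist w sublevel \<le> \<delta>" for w
  proof -
    define s where "s = infdist w sublevel"
    have s0: "0 < s" using infdist_sublevel_pos[OF w(1)] by (simp add: s_def)
    have "(INF a\<in>sublevel. dist w a) < 2 * s"
      using s0 by (simp add: s_def infdist_notempty[OF sublevel_nonempty])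
    then obtain \<zeta> where \<zeta>: "\<zeta> \<in> sublevel" "dist w \<zeta> < 2 * s"
      using cINF_less_iff[OF sublevel_nonempty, of "\<lambda>a. dist w a"] by (auto intro: bdd_belowI[of _ 0])
    have "4 * s \<le> \<rho>" "4 * s / \<rho> \<le> \<eta> / 2"
      using w(2) \<rho>(1) by (auto simp: s_def \<delta>_def field_simps)
    moreover from this(1) have "potential w \<le> V + 2 * measure \<mu> (ball \<zeta> \<rho>) + 4 * s / \<rho>"
      by (rule potential_le_near_point[OF \<zeta>(1) w(1) s_def \<zeta>(2)])
    ultimately show ?thesis using \<rho>(2)[of \<zeta>] by linarith
  qed
  moreover have "0 < \<delta>" using \<rho>(1) assms by (simp add: \<delta>_def)
  ultimately show ?thesis using that by blast
qed

lemma circle_integral_potential: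
  assumes d: "0 < d" and dist: "AE y in \<mu>. \<forall>t. d \<le> cmod (c + of_real r * cis t - y)"
    and [measurable]: "h \<in> borel_measurable borel"
    and inner: "AE y in \<mu>. integral {0..2*pi} (\<lambda>t. - ln (cmod (c + of_real r * cis t - y))) = h y"
  shows "integral {0..2*pi} (\<lambda>t. potential (c + of_real r * cis t)) = integral\<^sup>L \<mu> h"
proof -
  have "AE y in \<mu>. \<forall>t. \<bar>- ln (cmod (c + of_real r * cis t - y))\<bar> \<le> \<bar>ln d\<bar> + \<bar>ln (cmod c + \<bar>r\<bar> + radius)\<bar>"
    using dist AE_in_K
  proof eventually_elim
    case (elim y)
    show ?case
    proof
      fix t
      have "cmod (c + of_real r * cis t - y) \<le> cmod c + \<bar>r\<bar> + radius"
        using norm_triangle_ineq4[of "c + of_real r * cis t" y] norm_triangle_ineq[of c "of_real r * cis t"]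
          norm_le_radius[OF elim(2)] by (simp add: norm_mult)
      thus "\<bar>- ln (cmod (c + of_real r * cis t - y))\<bar> \<le> \<bar>ln d\<bar> + \<bar>ln (cmod c + \<bar>r\<bar> + radius)\<bar>"
        using abs_ln_le_abs_ln_bounds[OF d spec[OF elim(1), of t]] by simp
    qed
  qed
  thus ?thesis
    unfolding potential_def by (intro integral_interval_swap[OF M.finite_measure_axioms _ _ _ inner]) measurable
qed

lemma potential_mean_value:
  assumes r: "0 < r" "r < infdist w sublevel"
  shows "potential w = integral {0..2*pi} (\<lambda>t. potential (w + of_real r * cis t)) / (2*pi)"
proof -
  have "AE y in \<mu>. \<forall>t. infdist w sublevel - r \<le> cmod (w + of_real r * cis t - y)"
    using AE_infdist_sublevel_le[of w]
  proof eventually_elim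
    case (elim y)
    show ?case
    proof
      fix t
      have "cmod (w - y) \<le> cmod (w + of_real r * cis t - y) + r"
        using norm_triangle_ineq[of "w + of_real r * cis t - y" "- (of_real r * cis t)"] r(1)
        by (simp add: norm_mult)
      thus "infdist w sublevel - r \<le> cmod (w + of_real r * cis t - y)" using elim by simp
    qed
  qed
  moreover have "AE y in \<mu>. integral {0..2*pi} (\<lambda>t. - ln (cmod (w + of_real r * cis t - y)))
      = 2 * pi * - ln (cmod (w - y))"
    using AE_infdist_sublevel_le[of w]
  proof eventually_elim
    case (elim y)
    have "norm (of_real r :: complex) < norm (w - y)" using elim r by simp
    from has_integral_neg[OF has_integral_ln_norm_add_cis[OF this]]
    have "((\<lambda>t. - ln (cmod (w + of_real r * cis t - y))) has_integral 2 * pi * - ln (cmod (w - y))) {0..2*pi}"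
      by (simp add: algebra_simps)
    thus ?case by (rule integral_unique)
  qed
  ultimately have "integral {0..2*pi} (\<lambda>t. potential (w + of_real r * cis t)) = 2 * pi * potential w"
    using r by (subst circle_integral_potential[of "infdist w sublevel - r"]) (auto simp: potential_def)
  thus ?thesis by simp
qed

lemma potential_mean_value_shell:
  assumes "0 \<le> \<delta>" "\<delta> < infdist x sublevel"
  obtains r where "0 < r" "\<And>t. \<delta> \<le> infdist (x + of_real r * cis t) sublevel"
    and "potential x = integral {0..2*pi} (\<lambda>t. potential (x + of_real r * cis t)) / (2*pi)"
proof
  define r where "r = (infdist x sublevel - \<delta>) / 2"
  show r: "0 < r" using assms by (simp add: r_def)
  show "\<delta> \<le> infdist (x + of_real r * cis t) sublevel" for t
  proof -
    have "dist x (x + of_real r * cis t) = r" using r by (simp add: dist_norm norm_mult)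
    moreover have "2 * r = infdist x sublevel - \<delta>" by (simp add: r_def)
    ultimately show ?thesis using infdist_triangle[of x sublevel "x + of_real r * cis t"] r by linarith
  qed
  show "potential x = integral {0..2*pi} (\<lambda>t. potential (x + of_real r * cis t)) / (2*pi)"
    using assms by (intro potential_mean_value) (auto simp: r_def)
qed

lemma potential_le_ln_dist:
  assumes "radius < cmod x" shows "potential x \<le> - ln (cmod x - radius)"
  unfolding potential_def
proof (rule M.integral_le_const)
  have "x \<notin> K" using assms norm_le_radius by force
  thus "integrable \<mu> (\<lambda>y. - ln (cmod (x - y)))"
    using closure_sublevel_subset integrable_kernel_off_closure by blast
  show "AE y in \<mu>. - ln (cmod (x - y)) \<le> - ln (cmod x - radius)"
    using AE_in_K
  proof eventually_elim
    case (elim y)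
    have "cmod x - radius \<le> cmod (x - y)"
      using norm_triangle_ineq2[of x y] norm_le_radius[OF elim] by simp
    thus ?case using ln_mono[of "cmod x - radius" "cmod (x - y)"] assms by simp
  qed
qed

lemma potential_le_beyond_level:
  assumes \<delta>: "0 < \<delta>" and level: "\<And>x. infdist x sublevel = \<delta> \<Longrightarrow> potential x \<le> c"
    and w: "\<delta> \<le> infdist w sublevel"
  shows "potential w \<le> c"
proof (rule mean_value_maximum_principle[of "{x. \<delta> \<le> infdist x sublevel}"])
  show "closed {x. \<delta> \<le> infdist x sublevel}" by (intro closed_Collect_le continuous_intros)
  show "continuous_on {x. \<delta> \<le> infdist x sublevel} potential" by (rule continuous_on_potential[OF \<delta>])
  show "w \<in> {x. \<delta> \<le> infdist x sublevel}" using w by simp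
next
  fix x assume x: "x \<in> {x. \<delta> \<le> infdist x sublevel}" and "c < potential x"
  hence "\<delta> \<noteq> infdist x sublevel" using level[of x] not_le by metis
  with x have "\<delta> < infdist x sublevel" by (simp add: order.not_eq_order_implies_strict)
  from potential_mean_value_shell[OF less_imp_le[OF \<delta>] this]
  show "\<exists>r>0. (\<forall>t. x + of_real r * cis t \<in> {x. \<delta> \<le> infdist x sublevel}) \<and>
      potential x = integral {0..2*pi} (\<lambda>t. potential (x + of_real r * cis t)) / (2*pi)"
    by (metis mem_Collect_eq)
next
  fix x assume "radius + exp (- c) \<le> cmod x"
  hence "exp (- c) \<le> cmod x - radius" and "radius < cmod x"
    using exp_gt_zero[of "- c"] by linarith+
  hence "- ln (cmod x - radius) \<le> c" using ln_mono[of "exp (- c)" "cmod x - radius"] by simp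
  thus "potential x \<le> c" using potential_le_ln_dist[OF \<open>radius < cmod x\<close>] by simp
qed

text \<open>Off the closure of the sublevel set the potential is continuous, has
  the mean value property, is close to \<open>V\<close> near that closure and tends to \<open>-\<infinity>\<close> at infinity,
  so the maximum principle applies.\<close>
lemma potential_le_V: "potential w \<le> V"
proof (cases "w \<in> closure sublevel")
  case True thus ?thesis by (rule potential_le_on_closure)
next
  case False
  show ?thesis
  proof (rule field_le_epsilon)
    fix \<eta> :: real assume "0 < \<eta>"
    obtain \<delta> where \<delta>: "0 < \<delta>"
      and near: "\<And>w. w \<notin> closure sublevel \<Longrightarrow> infdist w sublevel \<le> \<delta> \<Longrightarrow> potential w \<le> V + \<eta>"
      using potential_le_near_sublevel[OF \<open>0 < \<eta>\<close>] by blast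
    have level: "potential x \<le> V + \<eta>" if "infdist x sublevel = \<delta>" for x
      using near[of x] that \<delta> in_closure_iff_infdist_zero[OF sublevel_nonempty, of x] by simp
    show "potential w \<le> V + \<eta>"
      using near[OF False] potential_le_beyond_level[OF \<delta> level] by (cases "infdist w sublevel \<le> \<delta>") auto
  qed
qed

lemma integrable_kernel_everywhere: "integrable \<mu> (\<lambda>y. - ln (cmod (w - y)))"
  using integrable_kernel_off_closure potential_le_on_closure(1) by blast

subsection \<open>Capacity and the exterior of the disc\<close>

lemma circle_integral_potential_centered:
  assumes "radius < \<rho>"
  shows "integral {0..2*pi} (\<lambda>t. potential (of_real \<rho> * cis t)) = 2 * pi * - ln \<rho>"
proof -
  have \<rho>: "0 < \<rho>" using assms radius_nonneg by simp
  have "AE y in \<mu>. \<forall>t. \<rho> - radius \<le> cmod (0 + of_real \<rho> * cis t - y)"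
    using AE_in_K
  proof eventually_elim
    case (elim y)
    show ?case
    proof
      fix t
      show "\<rho> - radius \<le> cmod (0 + of_real \<rho> * cis t - y)"
        using norm_triangle_ineq2[of "of_real \<rho> * cis t" y] norm_le_radius[OF elim] \<rho>
        by (simp add: norm_mult)
    qed
  qed
  moreover have "AE y in \<mu>. integral {0..2*pi} (\<lambda>t. - ln (cmod (0 + of_real \<rho> * cis t - y))) = 2 * pi * - ln \<rho>"
    using AE_in_K
  proof eventually_elim
    case (elim y)
    have "norm (- cnj y) < norm (of_real \<rho> :: complex)" using norm_le_radius[OF elim] assms \<rho> by simp
    from has_integral_neg[OF has_integral_ln_norm_add_cis[OF this]]
    have "((\<lambda>t. - ln (cmod (of_real \<rho> * cis t - y))) has_integral - (2 * pi * ln \<rho>)) {0..2*pi}"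
      using \<rho> by (simp only: norm_of_real_cis_diff[symmetric] norm_of_real abs_of_pos)
    from integral_unique[OF this] show ?case by simp
  qed
  ultimately show ?thesis
    using circle_integral_potential[of "\<rho> - radius" 0 \<rho> "\<lambda>_. 2 * pi * - ln \<rho>"] assms by simp
qed

lemma neg_ln_le_V:
  assumes "radius < \<rho>" shows "- ln \<rho> \<le> V"
proof -
  have \<rho>: "0 < \<rho>" using assms radius_nonneg by simp
  have "continuous_on {0..2*pi} (\<lambda>t. potential (of_real \<rho> * cis t))"
  proof (rule continuous_on_compose2[OF continuous_on_potential[of "\<rho> - radius"]])
    show "(\<lambda>t. of_real \<rho> * cis t) ` {0..2*pi} \<subseteq> {w. \<rho> - radius \<le> infdist w sublevel}"
    proof clarify
      fix t
      show "\<rho> - radius \<le> infdist (of_real \<rho> * cis t) sublevel"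
        using infdist_sublevel_ge[of "of_real \<rho> * cis t"] \<rho> by (simp add: norm_mult)
    qed
  qed (use assms in \<open>auto intro!: continuous_intros\<close>)
  hence "integral {0..2*pi} (\<lambda>t. potential (of_real \<rho> * cis t)) \<le> integral {0..2*pi} (\<lambda>t. V)"
    by (intro integral_le integrable_continuous_interval potential_le_V) auto
  hence "2 * pi * - ln \<rho> \<le> 2 * pi * V"
    using circle_integral_potential_centered[OF assms] by simp
  thus ?thesis using mult_le_cancel_left_pos[of "2 * pi" "- ln \<rho>" V] by simp
qed

lemma capacity_le_radius: "exp (- V) \<le> radius"
proof (rule ccontr)
  assume "\<not> exp (- V) \<le> radius"
  define \<rho> where "\<rho> = (radius + exp (- V)) / 2"
  have \<rho>: "radius < \<rho>" "\<rho> < exp (- V)" "0 < \<rho>"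
    using \<open>\<not> exp (- V) \<le> radius\<close> radius_nonneg by (auto simp: \<rho>_def)
  hence "ln \<rho> < ln (exp (- V))" by (subst ln_less_cancel_iff) auto
  thus False using neg_ln_le_V[OF \<rho>(1)] by simp
qed

lemma radius_pos: "0 < radius"
  using capacity_le_radius by (meson exp_gt_zero less_le_trans)

lemma potential_add_ln_le_far:
  assumes "radius < cmod w"
  shows "potential w + ln (cmod w) \<le> radius / (cmod w - radius)"
proof -
  have "ln (cmod w) - ln (cmod w - radius) \<le> (cmod w - (cmod w - radius)) / (cmod w - radius)"
    using assms radius_pos by (intro ln_diff_le) auto
  thus ?thesis using potential_le_ln_dist[OF assms] by simp
qed

lemma potential_add_ln_mean_value:
  assumes r: "0 < r" "radius + r < cmod w"
  shows "potential w + ln (cmod w) = integral {0..2*pi}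
           (\<lambda>t. potential (w + of_real r * cis t) + ln (cmod (w + of_real r * cis t))) / (2*pi)"
proof -
  have "continuous_on {0..2*pi} (\<lambda>t. potential (w + of_real r * cis t))"
  proof (rule continuous_on_compose2[OF continuous_on_potential[of "cmod w - radius - r"]])
    show "(\<lambda>t. w + of_real r * cis t) ` {0..2*pi} \<subseteq> {x. cmod w - radius - r \<le> infdist x sublevel}"
    proof clarify
      fix t
      have "cmod w - r \<le> cmod (w + of_real r * cis t)"
        using norm_triangle_ineq2[of w "- (of_real r * cis t)"] r(1) by (simp add: norm_mult)
      thus "cmod w - radius - r \<le> infdist (w + of_real r * cis t) sublevel"
        using infdist_sublevel_ge[of "w + of_real r * cis t"] by simp
    qed
  qed (use r in \<open>auto intro!: continuous_intros\<close>)
  moreover have "r < infdist w sublevel" using infdist_sublevel_ge[of w] r by simp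
  ultimately have "((\<lambda>t. potential (w + of_real r * cis t)) has_integral (2 * pi * potential w)) {0..2*pi}"
    using potential_mean_value[OF r(1)] integrable_integral[OF integrable_continuous_interval] by simp
  moreover have "((\<lambda>t. ln (cmod (w + of_real r * cis t))) has_integral (2 * pi * ln (cmod w))) {0..2*pi}"
    using r radius_nonneg by (intro has_integral_ln_norm_add_cis) simp
  ultimately have "((\<lambda>t. potential (w + of_real r * cis t) + ln (cmod (w + of_real r * cis t)))
      has_integral (2 * pi * (potential w + ln (cmod w)))) {0..2*pi}"
    by (simp add: has_integral_add distrib_left)
  thus ?thesis by (simp add: integral_unique)
qed

lemma potential_add_ln_mean_value_shell:
  assumes "radius < R'" "R' < cmod w"
  obtains r where "0 < r" "\<And>t. R' \<le> cmod (w + of_real r * cis t)"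
    and "potential w + ln (cmod w) = integral {0..2*pi}
           (\<lambda>t. potential (w + of_real r * cis t) + ln (cmod (w + of_real r * cis t))) / (2*pi)"
proof
  define r where "r = (cmod w - R') / 2"
  show r: "0 < r" using assms by (simp add: r_def)
  show "R' \<le> cmod (w + of_real r * cis t)" for t
  proof -
    have "cmod w - r \<le> cmod (w + of_real r * cis t)"
      using norm_triangle_ineq2[of w "- (of_real r * cis t)"] r by (simp add: norm_mult)
    moreover have "R' \<le> cmod w - r" using assms by (simp add: r_def field_simps)
    ultimately show ?thesis by simp
  qed
  have "radius + r < cmod w" unfolding r_def using assms by (simp add: field_simps)
  with r show "potential w + ln (cmod w) = integral {0..2*pi}
      (\<lambda>t. potential (w + of_real r * cis t) + ln (cmod (w + of_real r * cis t))) / (2*pi)"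
    by (rule potential_add_ln_mean_value)
qed

text \<open>Maximum principle for \<open>U + ln |z|\<close> outside the disc of radius \<open>R'\<close>: on its boundary
  Frostman's theorem gives the bound \<open>V + ln R'\<close>, which is positive since \<open>Cap K \<le> radius\<close>,
  while at infinity \<open>U + ln |z|\<close> tends to \<open>0\<close>.\<close>
lemma potential_add_ln_le:
  assumes R': "radius < R'" "R' \<le> cmod a"
  shows "potential a + ln (cmod a) \<le> V + ln R'"
proof -
  define c where "c = V + ln R'"
  define F where "F = {w. R' \<le> cmod w}"
  have R'0: "0 < R'" using R' radius_pos by simp
  have "radius < (radius + R') / 2" "ln ((radius + R') / 2) < ln R'"
    using R' radius_pos by auto
  hence c0: "0 < c" using neg_ln_le_V[of "(radius + R') / 2"] by (simp add: c_def)
  show ?thesis unfolding c_def[symmetric]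
  proof (rule mean_value_maximum_principle[of F])
    show "closed F" unfolding F_def by (intro closed_Collect_le continuous_intros)
    have "F \<subseteq> {w. R' - radius \<le> infdist w sublevel}"
      using infdist_sublevel_ge unfolding F_def by (smt (verit) mem_Collect_eq subsetI)
    thus "continuous_on F (\<lambda>w. potential w + ln (cmod w))"
      using R' R'0 by (intro continuous_intros continuous_on_subset[OF continuous_on_potential])
        (auto simp: F_def)
    show "a \<in> F" using R' by (simp add: F_def)
  next
    fix w assume "w \<in> F" and gt: "c < potential w + ln (cmod w)"
    have "R' < cmod w"
    proof (rule ccontr)
      assume "\<not> R' < cmod w"
      hence "cmod w = R'" using \<open>w \<in> F\<close> by (simp add: F_def)
      thus False using gt potential_le_V[of w] by (simp add: c_def)
    qed
    obtain r where "0 < r" "\<And>t. w + of_real r * cis t \<in> F" and "potential w + ln (cmod w)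
        = integral {0..2*pi} (\<lambda>t. potential (w + of_real r * cis t) + ln (cmod (w + of_real r * cis t))) / (2*pi)"
      using potential_add_ln_mean_value_shell[OF R'(1) \<open>R' < cmod w\<close>] unfolding F_def mem_Collect_eq by blast
    thus "\<exists>r>0. (\<forall>t. w + of_real r * cis t \<in> F) \<and> potential w + ln (cmod w)
        = integral {0..2*pi} (\<lambda>t. potential (w + of_real r * cis t) + ln (cmod (w + of_real r * cis t))) / (2*pi)"
      by blast
  next
    fix w assume w: "radius + radius / c + 1 \<le> cmod w"
    moreover have "0 \<le> radius / c" using c0 radius_pos by simp
    ultimately have "radius / c < cmod w - radius" "radius < cmod w" by linarith+
    hence "radius / (cmod w - radius) \<le> c"
      using c0 by (simp add: field_simps)
    thus "potential w + ln (cmod w) \<le> c" using potential_add_ln_le_far[OF \<open>radius < cmod w\<close>] by simp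
  qed
qed

lemma potential_add_ln_le_radius:
  assumes "radius < cmod a"
  shows "potential a + ln (cmod a) \<le> V + ln radius"
proof (rule tendsto_lowerbound)
  show "((\<lambda>r. V + ln r) \<longlongrightarrow> V + ln radius) (at_right radius)"
    using radius_pos by (intro tendsto_intros) auto
  show "eventually (\<lambda>r. potential a + ln (cmod a) \<le> V + ln r) (at_right radius)"
    unfolding eventually_at_right[OF assms] using potential_add_ln_le assms less_imp_le by blast
qed simp

lemma integral_ln_dist_ge:
  "ln (exp (- V) * max radius (cmod a) / radius) \<le> (\<integral>z. ln (cmod (z - a)) \<partial>\<mu>)"
proof -
  have eq: "(\<integral>z. ln (cmod (z - a)) \<partial>\<mu>) = - potential a"
    unfolding potential_def by (simp add: norm_minus_commute)
  show ?thesis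
  proof (cases "radius < cmod a")
    case True
    moreover have "a \<noteq> 0" using True radius_pos by auto
    ultimately have "ln (exp (- V) * max radius (cmod a) / radius) = - V + ln (cmod a) - ln radius"
      using radius_pos by (simp add: ln_div ln_mult)
    thus ?thesis using eq potential_add_ln_le_radius[OF True] by simp
  next
    case False
    thus ?thesis using eq potential_le_V[of a] radius_pos by (simp add: max_def)
  qed
qed

subsection \<open>Mahler measure\<close>

lemma integrable_ln_dist: "integrable \<mu> (\<lambda>z. ln (cmod (z - a)))"
  using integrable_minus[OF integrable_kernel_everywhere[of a]] by (simp add: norm_minus_commute)

lemma integral_sum_ln_dist:
  shows "integrable \<mu> (\<lambda>z. \<Sum>a\<in>#A. ln (cmod (z - a)))"
    and "(\<integral>z. (\<Sum>a\<in>#A. ln (cmod (z - a))) \<partial>\<mu>) = (\<Sum>a\<in>#A. \<integral>z. ln (cmod (z - a)) \<partial>\<mu>)"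
  by (induction A) (auto simp: integrable_ln_dist)

lemma integral_ln_norm_poly:
  assumes "P \<noteq> 0"
  shows "integrable \<mu> (\<lambda>z. ln (cmod (poly P z)))"
    and "(\<integral>z. ln (cmod (poly P z)) \<partial>\<mu>)
      = ln (cmod (lead_coeff P)) + (\<Sum>a\<in>#proots P. \<integral>z. ln (cmod (z - a)) \<partial>\<mu>)"
proof -
  define c where "c = lead_coeff P"
  define S where "S z = (\<Sum>a\<in>#proots P. ln (cmod (z - a)))" for z
  have c: "c \<noteq> 0" using assms by (simp add: c_def)
  have decompose: "P = smult c (\<Prod>a\<in>#proots P. [:-a, 1:])"
    using complex_poly_decompose_multiset[of P] by (simp add: c_def)
  have "AE z in \<mu>. \<forall>a\<in>set_mset (proots P). z \<noteq> a"
    by (rule eventually_ball_finite) (auto intro: AE_neq)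
  hence AE_eq: "AE z in \<mu>. ln (cmod (poly P z)) = ln (cmod c) + S z"
  proof eventually_elim
    case (elim z)
    hence "z \<notin># proots P" by auto
    moreover have "poly P z \<noteq> 0" using elim assms by auto
    moreover have "poly P z = c * poly (\<Prod>a\<in>#proots P. [:-a, 1:]) z" by (subst decompose) simp
    ultimately show ?case
      using c by (simp add: norm_mult ln_mult S_def ln_norm_poly_prod_linear)
  qed
  have [measurable]: "poly P \<in> borel_measurable borel"
    by (intro borel_measurable_continuous_onI continuous_intros)
  have [measurable]: "S \<in> borel_measurable \<mu>"
    unfolding S_def using integral_sum_ln_dist(1) by (rule borel_measurable_integrable)
  show "integrable \<mu> (\<lambda>z. ln (cmod (poly P z)))"
    using integral_sum_ln_dist(1)[of "proots P"] AE_eq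
    by (subst integrable_cong_AE[where g = "\<lambda>z. ln (cmod c) + S z"]) (auto simp: S_def elim: eventually_mono)
  show "(\<integral>z. ln (cmod (poly P z)) \<partial>\<mu>)
      = ln (cmod (lead_coeff P)) + (\<Sum>a\<in>#proots P. \<integral>z. ln (cmod (z - a)) \<partial>\<mu>)"
    using integral_cong_AE[OF _ _ AE_eq] integral_sum_ln_dist[of "proots P"] by (simp add: S_def c_def)
qed

lemma mahler_ge:
  assumes "P \<noteq> 0"
  shows "cmod (lead_coeff P) * (exp (- V) / radius) ^ degree P * (\<Prod>a\<in>#proots P. max radius (cmod a))
    \<le> mahler \<mu> P"
proof -
  have mahler_eq: "mahler \<mu> P = cmod (lead_coeff P) * exp (\<Sum>a\<in>#proots P. \<integral>z. ln (cmod (z - a)) \<partial>\<mu>)"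
    using assms integral_ln_norm_poly[OF assms] by (simp add: mahler_def exp_add)
  have "(\<Sum>a\<in>#proots P. ln (exp (- V) * max radius (cmod a) / radius))
      \<le> (\<Sum>a\<in>#proots P. \<integral>z. ln (cmod (z - a)) \<partial>\<mu>)"
    by (rule sum_mset_mono) (rule integral_ln_dist_ge)
  moreover have "(\<Prod>a\<in>#proots P. exp (- V) * max radius (cmod a) / radius)
      = exp (\<Sum>a\<in>#proots P. ln (exp (- V) * max radius (cmod a) / radius))"
    unfolding exp_sum_mset using radius_pos
    by (intro arg_cong[where f = prod_mset] image_mset_cong) (simp add: less_max_iff_disj)
  ultimately have prod_le: "(\<Prod>a\<in>#proots P. exp (- V) * max radius (cmod a) / radius)
      \<le> exp (\<Sum>a\<in>#proots P. \<integral>z. ln (cmod (z - a)) \<partial>\<mu>)" by simp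
  have "(\<Prod>a\<in>#proots P. exp (- V) * max radius (cmod a) / radius)
      = (\<Prod>a\<in>#proots P. exp (- V) / radius * max radius (cmod a))"
    by (intro arg_cong[where f = prod_mset] image_mset_cong) simp
  also have "\<dots> = (exp (- V) / radius) ^ degree P * (\<Prod>a\<in>#proots P. max radius (cmod a))"
    by (simp only: prod_mset.distrib prod_mset_constant size_proots_complex)
  finally have prod_eq: "(\<Prod>a\<in>#proots P. exp (- V) * max radius (cmod a) / radius)
      = (exp (- V) / radius) ^ degree P * (\<Prod>a\<in>#proots P. max radius (cmod a))" .
  show ?thesis
    using mult_left_mono[OF prod_le norm_ge_zero[of "lead_coeff P"]]
    unfolding mahler_eq prod_eq by (simp add: mult.assoc)
qed

lemma norm_coeff_le_mahler:
  assumes "degree P \<le> d" and "k \<le> d"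
  shows "cmod (coeff P k) \<le> real (d choose k) * mahler \<mu> P * radius ^ (d - k) / exp (- V) ^ d"
proof (cases "P = 0")
  case True thus ?thesis by (simp add: mahler_def)
next
  case False
  define q where "q = radius / exp (- V)"
  define Pr where "Pr = (\<Prod>a\<in>#proots P. max radius (cmod a))"
  have q: "1 \<le> q" using capacity_le_radius by (simp add: q_def)
  have M: "0 \<le> mahler \<mu> P" by (simp add: mahler_def)
  have "coeff P k = lead_coeff P * coeff (\<Prod>a\<in>#proots P. [:-a, 1:]) k"
    by (metis coeff_smult complex_poly_decompose_multiset)
  hence "cmod (coeff P k) * radius ^ k \<le> cmod (lead_coeff P) * (real (degree P choose k) * Pr)"
    using norm_coeff_prod_linear_le[OF radius_pos, of "proots P" k]
    by (simp add: norm_mult mult.assoc mult_left_mono Pr_def size_proots_complex)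
  also have "\<dots> \<le> real (degree P choose k) * (mahler \<mu> P * q ^ degree P)"
  proof -
    have "cmod (lead_coeff P) * Pr = cmod (lead_coeff P) * (exp (- V) / radius) ^ degree P * Pr * q ^ degree P"
      using radius_pos by (simp add: q_def power_divide field_simps)
    also have "\<dots> \<le> mahler \<mu> P * q ^ degree P"
      using mahler_ge[OF False] q by (intro mult_right_mono) (auto simp: Pr_def)
    finally have "cmod (lead_coeff P) * Pr \<le> mahler \<mu> P * q ^ degree P" .
    from mult_left_mono[OF this, of "real (degree P choose k)"] show ?thesis by (simp add: mult_ac)
  qed
  also have "\<dots> \<le> real (d choose k) * (mahler \<mu> P * q ^ d)"
    using assms q M
    by (intro mult_mono mult_left_mono power_increasing) (auto simp: binomial_right_mono)
  finally have le: "cmod (coeff P k) * radius ^ k \<le> real (d choose k) * (mahler \<mu> P * q ^ d)" .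
  have "radius ^ (d - k) * radius ^ k = radius ^ d" using assms(2) by (simp flip: power_add)
  hence q_power: "radius ^ (d - k) / exp (- V) ^ d = q ^ d / radius ^ k"
    using radius_pos by (simp add: q_def power_divide field_simps)
  have "cmod (coeff P k) \<le> real (d choose k) * (mahler \<mu> P * q ^ d) / radius ^ k"
    using le radius_pos by (simp add: pos_le_divide_eq)
  also have "\<dots> = real (d choose k) * mahler \<mu> P * (radius ^ (d - k) / exp (- V) ^ d)"
    unfolding q_power by simp
  finally show ?thesis by simp
qed

end

lemma energy_minimizer_if_equilibrium:
  assumes "compact K" and "\<not> polar K" and "equilibrium_measure K \<mu>"
  shows "energy_minimizer K \<mu> (real_of_ereal (robin_const K))"
    and "log_cap K = exp (- real_of_ereal (robin_const K))"
proof -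
  have "robin_const K \<noteq> \<infinity>" using assms(2) by (auto simp: polar_def log_cap_def)
  thus "log_cap K = exp (- real_of_ereal (robin_const K))" by (simp add: log_cap_def)
  have eq: "log_energy \<mu> = robin_const K" using assms(3) by (simp add: equilibrium_measure_def)
  moreover have "log_energy \<mu> \<noteq> - \<infinity>" by (simp add: log_energy_def)
  ultimately have fin: "robin_const K = ereal (real_of_ereal (robin_const K))"
    using \<open>robin_const K \<noteq> \<infinity>\<close> by (cases "robin_const K") auto
  show "energy_minimizer K \<mu> (real_of_ereal (robin_const K))"
  proof
    show "compact K" by fact
    show "prob_on K \<mu>" using assms(3) by (simp add: equilibrium_measure_def)
    show "log_energy \<mu> = ereal (real_of_ereal (robin_const K))" using eq fin by simp
    fix \<nu> assume "prob_on K \<nu>"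
    hence "robin_const K \<le> log_energy \<nu>" unfolding robin_const_def by (auto intro!: Inf_lower)
    thus "ereal (real_of_ereal (robin_const K)) \<le> log_energy \<nu>" using fin by simp
  qed
qed

theorem theorem5p1:
  fixes K :: "complex set" and \<mu> :: "complex measure" and P :: "complex poly" and d k :: nat
  assumes "compact K" and "\<not> polar K"
    and "equilibrium_measure K \<mu>"
    and "degree P \<le> d" and "k \<le> d"
  shows "cmod (coeff P k) \<le>
    real (d choose k) * mahler \<mu> P * (Sup (cmod ` K)) ^ (d - k) / log_cap K ^ d"
proof -
  note equilibrium = energy_minimizer_if_equilibrium[OF assms(1-3)]
  interpret energy_minimizer K \<mu> "real_of_ereal (robin_const K)" by (rule equilibrium(1))
  show ?thesis using norm_coeff_le_mahler[OF assms(4,5)] by (simp add: equilibrium(2) radius_def)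
qed

end
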